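(* Let $\Gamma_n$ ($n\in\mathbb N$) be a sequence of nonatomic routing games on a fixed graph with fixed OD pairs $\mathcal I$, path sets $\mathcal P^i$ and edge costs $(c_e)_{e\in\mathcal E}$, where in $\Gamma_n$ OD pair $i$ has demand $m_n^i\ge 0$, with total inflow $M_n=\sum_i m_n^i>0$ and relative inflows $\lambda_n^i=m_n^i/M_n$. Let $c$ be a benchmark for $(c_e)$ at $\omega\in\{0,\infty\}$, and for each $i$ let $\alpha^i=\min_{p\in\mathcal P^i}\max_{e\in p}\alpha_e$ with $\alpha_e=\lim_{x\to\omega}c_e(x)/c(x)$. Suppose that (a) $\lim_{n\to\infty}M_n=\omega$; (b) $\alpha^i<\infty$ for all $i\in\mathcal I$; (c) $\liminf_{n\to\infty}\sum_{i:\alpha^i>0}\lambda_n^i>0$. Then $\mathrm{PoA}(\Gamma_n)\to 1$ as $n\to\infty$.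
   Context: A nonatomic routing game consists of: a finite directed multigraph with edge set $\mathcal E$; a finite set $\mathcal I$ of OD pairs, each $i$ with demand $m^i\ge 0$ and a nonempty finite set $\mathcal P^i$ of paths from its origin to its destination, the $\mathcal P^i$ pairwise disjoint, $\mathcal P=\bigcup_i\mathcal P^i$; and continuous nondecreasing edge costs $c_e:[0,\infty)\to[0,\infty)$. Total inflow $M=\sum_i m^i>0$. Feasible flows: $f\in\mathbb R_+^{\mathcal P}$ with $\sum_{p\in\mathcal P^i}f_p=m^i$; loads $x_e=\sum_{p\ni e}f_p$; path costs $c_p(f)=\sum_{e\in p}c_e(x_e)$. A Wardrop equilibrium is a feasible $f^*$ with $c_p(f^* )\le c_{p'}(f^* )$ whenever $p,p'\in\mathcal P^i$ and $f^*_p>0$. Social cost $L(x)=\sum_e x_ec_e(x_e)$; $\mathrm{Opt}$ its minimum over feasible loads, $\mathrm{Eq}=L(x^* )$ at an equilibrium load (independent of the equilibrium), $\mathrm{PoA}=\mathrm{Eq}/\mathrm{Opt}$ (set to $1$ if $\mathrm{Opt}=0$). A function $g:(0,\infty)\to(0,\infty)$ is regularly varying at $\omega$ if $\lim_{t\to\omega}g(tx)/g(t)$ is finite and nonzero for all $x>0$; a regularly varying (at $\omega$) function $c:(0,\infty)\to(0,\infty)$ is a benchmark for $(c_e)$ at $\omega$ if $\alpha_e=\lim_{x\to\omega}c_e(x)/c(x)\in[0,\infty]$ exists for every edge $e$. An OD pair $i$ is called tight if $0<\alpha^i<\infty$. *)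

theory Defs
  imports "HOL-Analysis.Analysis"
begin

definition is_path :: "('e \<Rightarrow> 'v) \<Rightarrow> ('e \<Rightarrow> 'v) \<Rightarrow> 'e set \<Rightarrow> 'v \<Rightarrow> 'v \<Rightarrow> 'e list \<Rightarrow> bool" where
  "is_path src tgt E u w p \<longleftrightarrow>
     set p \<subseteq> E \<and>
     (\<forall>k. Suc k < length p \<longrightarrow> tgt (p ! k) = src (p ! Suc k)) \<and>
     (p = [] \<longrightarrow> u = w) \<and>
     (p \<noteq> [] \<longrightarrow> src (p ! 0) = u \<and> tgt (last p) = w) \<and>
     distinct (u # map tgt p)"

definition routing_network ::
  "('e \<Rightarrow> 'v) \<Rightarrow> ('e \<Rightarrow> 'v) \<Rightarrow> 'e set \<Rightarrow> 'i set \<Rightarrow> ('i \<Rightarrow> 'v) \<Rightarrow> ('i \<Rightarrow> 'v)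
   \<Rightarrow> ('i \<Rightarrow> 'e list set) \<Rightarrow> ('e \<Rightarrow> real \<Rightarrow> real) \<Rightarrow> bool" where
  "routing_network src tgt E I orig dest P c \<longleftrightarrow>
     finite E \<and> finite I \<and>
     (\<forall>i\<in>I. finite (P i) \<and> P i \<noteq> {} \<and> (\<forall>p\<in>P i. is_path src tgt E (orig i) (dest i) p)) \<and>
     (\<forall>i\<in>I. \<forall>j\<in>I. i \<noteq> j \<longrightarrow> P i \<inter> P j = {}) \<and>
     (\<forall>e\<in>E. continuous_on {0..} (c e) \<and> mono_on {0..} (c e) \<and> (\<forall>x\<ge>0. c e x \<ge> 0))"

definition all_paths :: "'i set \<Rightarrow> ('i \<Rightarrow> 'e list set) \<Rightarrow> 'e list set" where
  "all_paths I P = (\<Union>i\<in>I. P i)"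

definition feasible_flow :: "'i set \<Rightarrow> ('i \<Rightarrow> 'e list set) \<Rightarrow> ('i \<Rightarrow> real) \<Rightarrow> ('e list \<Rightarrow> real) \<Rightarrow> bool" where
  "feasible_flow I P m f \<longleftrightarrow>
     (\<forall>p\<in>all_paths I P. f p \<ge> 0) \<and> (\<forall>i\<in>I. (\<Sum>p\<in>P i. f p) = m i)"

definition edge_load :: "'i set \<Rightarrow> ('i \<Rightarrow> 'e list set) \<Rightarrow> ('e list \<Rightarrow> real) \<Rightarrow> 'e \<Rightarrow> real" where
  "edge_load I P f e = (\<Sum>p\<in>{p\<in>all_paths I P. e \<in> set p}. f p)"

definition path_cost :: "('e \<Rightarrow> real \<Rightarrow> real) \<Rightarrow> 'i set \<Rightarrow> ('i \<Rightarrow> 'e list set) \<Rightarrow> ('e list \<Rightarrow> real) \<Rightarrow> 'e list \<Rightarrow> real" where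
  "path_cost c I P f p = (\<Sum>e\<in>set p. c e (edge_load I P f e))"

definition wardrop_eq :: "('e \<Rightarrow> real \<Rightarrow> real) \<Rightarrow> 'i set \<Rightarrow> ('i \<Rightarrow> 'e list set) \<Rightarrow> ('i \<Rightarrow> real) \<Rightarrow> ('e list \<Rightarrow> real) \<Rightarrow> bool" where
  "wardrop_eq c I P m f \<longleftrightarrow> feasible_flow I P m f \<and>
     (\<forall>i\<in>I. \<forall>p\<in>P i. \<forall>p'\<in>P i. f p > 0 \<longrightarrow> path_cost c I P f p \<le> path_cost c I P f p')"

definition social_cost :: "'e set \<Rightarrow> ('e \<Rightarrow> real \<Rightarrow> real) \<Rightarrow> ('e \<Rightarrow> real) \<Rightarrow> real" where
  "social_cost E c x = (\<Sum>e\<in>E. x e * c e (x e))"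

definition opt_cost :: "'e set \<Rightarrow> ('e \<Rightarrow> real \<Rightarrow> real) \<Rightarrow> 'i set \<Rightarrow> ('i \<Rightarrow> 'e list set) \<Rightarrow> ('i \<Rightarrow> real) \<Rightarrow> real" where
  "opt_cost E c I P m = Inf {social_cost E c (edge_load I P f) | f. feasible_flow I P m f}"

text \<open>Equilibrium social cost (well defined: independent of the chosen equilibrium).\<close>
definition eq_cost :: "'e set \<Rightarrow> ('e \<Rightarrow> real \<Rightarrow> real) \<Rightarrow> 'i set \<Rightarrow> ('i \<Rightarrow> 'e list set) \<Rightarrow> ('i \<Rightarrow> real) \<Rightarrow> real" where
  "eq_cost E c I P m = social_cost E c (edge_load I P (SOME f. wardrop_eq c I P m f))"

definition PoA :: "'e set \<Rightarrow> ('e \<Rightarrow> real \<Rightarrow> real) \<Rightarrow> 'i set \<Rightarrow> ('i \<Rightarrow> 'e list set) \<Rightarrow> ('i \<Rightarrow> real) \<Rightarrow> real" where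
  "PoA E c I P m = (if opt_cost E c I P m = 0 then 1 else eq_cost E c I P m / opt_cost E c I P m)"

text \<open>The point \<omega> \<in> {0,\<infinity>} is represented by the filter F: at_right 0 or at_top.\<close>

definition regularly_varying :: "real filter \<Rightarrow> (real \<Rightarrow> real) \<Rightarrow> bool" where
  "regularly_varying F g \<longleftrightarrow> (\<forall>x>0. g x > 0) \<and>
     (\<forall>x>0. \<exists>L::real. L \<noteq> 0 \<and> ((\<lambda>t. g (t * x) / g t) \<longlongrightarrow> L) F)"

definition benchmark :: "real filter \<Rightarrow> (real \<Rightarrow> real) \<Rightarrow> 'e set \<Rightarrow> ('e \<Rightarrow> real \<Rightarrow> real) \<Rightarrow> bool" where
  "benchmark F cb E c \<longleftrightarrow> regularly_varying F cb \<and>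
     (\<forall>e\<in>E. \<exists>a::ereal. ((\<lambda>x. ereal (c e x / cb x)) \<longlongrightarrow> a) F)"

definition alpha_edge :: "real filter \<Rightarrow> (real \<Rightarrow> real) \<Rightarrow> ('e \<Rightarrow> real \<Rightarrow> real) \<Rightarrow> 'e \<Rightarrow> ereal" where
  "alpha_edge F cb c e = Lim F (\<lambda>x. ereal (c e x / cb x))"

text \<open>\<alpha>^i = min over paths of max over edges of \<alpha>_e (max over the empty edge set of the
  trivial path is taken to be 0; all \<alpha>_e are \<ge> 0).\<close>
definition alpha_od :: "real filter \<Rightarrow> (real \<Rightarrow> real) \<Rightarrow> ('e \<Rightarrow> real \<Rightarrow> real) \<Rightarrow> ('i \<Rightarrow> 'e list set) \<Rightarrow> 'i \<Rightarrow> ereal" where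
  "alpha_od F cb c P i = Min ((\<lambda>p. Max (insert 0 (alpha_edge F cb c ` set p))) ` P i)"

end

theory Submission
  imports Defs
begin

text \<open>Equilibria exist because minimisers of the Beckmann potential
  \<open>\<Phi>(f) = \<Sum>\<^sub>e \<integral>\<^sub>0\<^sup>x\<^sub>e c\<^sub>e\<close> are equilibria. Classify the edges by \<open>\<alpha>\<^sub>e\<close>: steep (\<open>\<alpha>\<^sub>e = \<infinity>\<close>), tight
  (\<open>0 < \<alpha>\<^sub>e < \<infinity>\<close>) and negligible (\<open>\<alpha>\<^sub>e = 0\<close>). By (b) every OD pair has a path avoiding the steep
  edges; hence the equilibrium puts only a load \<open>o(M)\<close> on them, and the variational inequality with
  costs truncated at the cost of such a path shows that the potential of the equilibrium exceeds
  that of any other flow by at most \<open>o(M c(M))\<close>. On a tight edge, regular variation of \<open>c\<close> gives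
  \<open>\<integral>\<^sub>0\<^sup>x c\<^sub>e \<approx> (\<integral>\<^sub>0\<^sup>1 L) x c\<^sub>e(x)\<close> with \<open>L(r) = lim c(t r)/c(t)\<close>, which is made quantitative with
  Riemann sums on the grid \<open>k/K\<close>; negligible edges contribute \<open>o(M c(M))\<close>. So the social costs
  of the equilibrium and of the optimum are in ratio \<open>1 + o(1)\<close> up to errors \<open>o(M c(M))\<close>, and by (c)
  every flow costs at least a constant times \<open>M c(M)\<close>.\<close>

section \<open>The Beckmann potential of a cost function\<close>

definition cost_potential :: "(real \<Rightarrow> real) \<Rightarrow> real \<Rightarrow> real" where
  "cost_potential g x = integral {0..x} g"

locale cost_function =
  fixes g :: "real \<Rightarrow> real"
  assumes continuous: "continuous_on {0..} g" and mono: "mono_on {0..} g"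
    and nonneg: "\<And>x. x \<ge> 0 \<Longrightarrow> g x \<ge> 0"
begin

lemma integrable_on_interval: "0 \<le> a \<Longrightarrow> g integrable_on {a..b}"
  by (rule integrable_continuous_interval) (rule continuous_on_subset[OF continuous], auto)

lemma integral_bounds:
  assumes "0 \<le> a" "a \<le> b"
  shows "(b - a) * g a \<le> integral {a..b} g" "integral {a..b} g \<le> (b - a) * g b"
proof -
  have "integral {a..b} (\<lambda>x. g a) \<le> integral {a..b} g"
    by (rule integral_le) (use assms integrable_on_interval in \<open>auto intro!: mono_onD[OF mono]\<close>)
  then show "(b - a) * g a \<le> integral {a..b} g" using assms by simp
  have "integral {a..b} g \<le> integral {a..b} (\<lambda>x. g b)"
    by (rule integral_le) (use assms integrable_on_interval in \<open>auto intro!: mono_onD[OF mono]\<close>)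
  then show "integral {a..b} g \<le> (b - a) * g b" using assms by simp
qed

lemma cost_potential_diff:
  "0 \<le> a \<Longrightarrow> a \<le> b \<Longrightarrow> cost_potential g b - cost_potential g a = integral {a..b} g"
  unfolding cost_potential_def
  using Henstock_Kurzweil_Integration.integral_combine[where a=0 and c=a and b=b and f=g] integrable_on_interval[of 0 b] by auto

lemma cost_potential_supergradient:
  assumes "0 \<le> x" "0 \<le> y"
  shows "g x * (y - x) \<le> cost_potential g y - cost_potential g x"
proof (cases "x \<le> y")
  case True
  then show ?thesis
    using cost_potential_diff[of x y] integral_bounds[of x y] assms by (simp add: mult.commute)
next
  case False
  then have "cost_potential g x - cost_potential g y \<le> (x - y) * g x"
    using cost_potential_diff[of y x] integral_bounds[of y x] assms by simp
  then show ?thesis by (simp add: algebra_simps)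
qed

lemma cost_potential_nonneg: "0 \<le> x \<Longrightarrow> 0 \<le> cost_potential g x"
  using integral_bounds[of 0 x] nonneg[of 0] unfolding cost_potential_def
  by (smt (verit) mult_nonneg_nonneg)

lemma cost_potential_le: "0 \<le> x \<Longrightarrow> cost_potential g x \<le> x * g x"
  using integral_bounds[of 0 x] by (simp add: cost_potential_def)

lemma continuous_on_cost_potential: "continuous_on {0..} (cost_potential g)"
  unfolding continuous_on_def
proof (intro ballI)
  fix x :: real assume x: "x \<in> {0..}"
  have "continuous_on {0..x+1} (cost_potential g)"
    unfolding cost_potential_def
    by (rule indefinite_integral_continuous_1, rule integrable_on_interval, simp)
  then have "(cost_potential g \<longlongrightarrow> cost_potential g x) (at x within {0..x+1})"
    using x by (simp add: continuous_on_def)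
  moreover have "at x within {0..x+1} = at x within {0..}"
    by (rule at_within_nhd[where S="{..<x+1}"]) auto
  ultimately show "(cost_potential g \<longlongrightarrow> cost_potential g x) (at x within {0..})" by simp
qed

lemma cost_potential_riemann_partial:
  assumes x: "0 \<le> x" and K: "K > 0"
  shows "k \<le> K \<Longrightarrow>
    cost_potential g (x * real k / real K) \<le> (\<Sum>j\<in>{1..k}. x / real K * g (x * real j / real K)) \<and>
    (\<Sum>j\<in>{1..k}. x / real K * g (x * (real j - 1) / real K)) \<le> cost_potential g (x * real k / real K)"
proof (induction k)
  case 0
  then show ?case by (simp add: cost_potential_def)
next
  case (Suc k)
  define a where "a = x * real k / real K"
  define b where "b = x * real (Suc k) / real K"
  have a0: "0 \<le> a" using x K by (simp add: a_def)
  have ab: "a \<le> b" using x K by (simp add: a_def b_def divide_right_mono mult_left_mono)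
  have "b - a = x / real K" by (simp add: a_def b_def add_divide_distrib distrib_left)
  then have step: "integral {a..b} g \<le> x / real K * g b" "x / real K * g a \<le> integral {a..b} g"
    using integral_bounds[OF a0 ab] by auto
  have diff: "cost_potential g b - cost_potential g a = integral {a..b} g"
    using cost_potential_diff a0 ab by blast
  have a_eq: "x * (real (Suc k) - 1) / real K = a" by (simp add: a_def)
  from Suc have IH: "cost_potential g a \<le> (\<Sum>j\<in>{1..k}. x / real K * g (x * real j / real K))"
    "(\<Sum>j\<in>{1..k}. x / real K * g (x * (real j - 1) / real K)) \<le> cost_potential g a"
    by (auto simp: a_def)
  have "(\<Sum>j\<in>{1..Suc k}. x / real K * g (x * real j / real K))
      = (\<Sum>j\<in>{1..k}. x / real K * g (x * real j / real K)) + x / real K * g b"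
    by (simp add: b_def)
  moreover have "(\<Sum>j\<in>{1..Suc k}. x / real K * g (x * (real j - 1) / real K))
      = (\<Sum>j\<in>{1..k}. x / real K * g (x * (real j - 1) / real K)) + x / real K * g a"
    using a_eq by simp
  ultimately show ?case unfolding b_def[symmetric] using IH diff step by linarith
qed

lemma cost_potential_riemann:
  assumes "0 \<le> x" "K > 0"
  shows "cost_potential g x \<le> (\<Sum>j\<in>{1..K}. x / real K * g (x * real j / real K))"
    and "(\<Sum>j\<in>{1..K}. x / real K * g (x * (real j - 1) / real K)) \<le> cost_potential g x"
  using cost_potential_riemann_partial[OF assms, of K] assms by auto

lemma mult_self_mono: "0 \<le> x \<Longrightarrow> x \<le> b \<Longrightarrow> x * g x \<le> b * g b"
  using nonneg mono by (intro mult_mono) (auto intro: mono_onD)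

text \<open>\<open>U\<close> and \<open>l\<close> are the upper and lower Riemann sums of \<open>L\<close> on the grid \<open>k / K\<close>; loads
  below \<open>\<epsilon> * M\<close>, where the scaling hypothesis says nothing, are absorbed by the error term.\<close>
lemma cost_potential_regular_bounds:
  fixes K :: nat
  assumes K: "0 < K" and x: "0 \<le> x" "x \<le> M" and eps: "0 < \<epsilon>" "\<epsilon> \<le> 1" and eta: "0 \<le> \<eta>"
    and scaling: "\<And>z k. \<epsilon> * M \<le> z \<Longrightarrow> z \<le> M \<Longrightarrow> k \<in> {1..K} \<Longrightarrow>
                   \<bar>g (z * real k / real K) - L k * g z\<bar> \<le> \<eta> * g z"
    and L0: "L 0 = 0"
    and U: "U = (\<Sum>k\<in>{1..K}. L k) / real K" and l: "l = (\<Sum>k\<in>{1..K}. L (k - 1)) / real K"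
    and l_bounds: "0 \<le> l - \<eta>" "l - \<eta> \<le> 1" and U_nonneg: "0 \<le> U + \<eta>"
  shows "(l - \<eta>) * (x * g x) \<le> cost_potential g x + \<epsilon> * M * g M"
    and "cost_potential g x \<le> (U + \<eta>) * (x * g x) + \<epsilon> * M * g M"
proof -
  have gx: "0 \<le> g x" and gM: "0 \<le> g M" using nonneg x by auto
  have "(l - \<eta>) * (x * g x) \<le> cost_potential g x \<and> cost_potential g x \<le> (U + \<eta>) * (x * g x)"
    if large: "\<epsilon> * M \<le> x"
  proof
    have "cost_potential g x \<le> (\<Sum>j\<in>{1..K}. x / real K * g (x * real j / real K))"
      by (rule cost_potential_riemann(1)[OF x(1) K])
    also have "\<dots> \<le> (\<Sum>j\<in>{1..K}. x / real K * ((L j + \<eta>) * g x))"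
      using scaling[OF large x(2)] x by (intro sum_mono mult_left_mono) (auto simp: algebra_simps abs_le_iff)
    also have "\<dots> = (\<Sum>j\<in>{1..K}. (x * g x / real K) * L j + (x * g x / real K) * \<eta>)"
      by (rule sum.cong) (auto simp: algebra_simps)
    also have "\<dots> = (x * g x / real K) * (\<Sum>j\<in>{1..K}. L j) + real K * (x * g x / real K * \<eta>)"
      by (simp add: sum.distrib sum_distrib_left)
    also have "\<dots> = (U + \<eta>) * (x * g x)"
      unfolding U using K by (simp add: field_simps)
    finally show "cost_potential g x \<le> (U + \<eta>) * (x * g x)" .
  next
    have approx: "(L (j - 1) - \<eta>) * g x \<le> g (x * (real j - 1) / real K)" if j: "j \<in> {1..K}" for j
    proof (cases "j = 1")
      case True
      have "0 \<le> \<eta> * g x" using eta gx by simp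
      then show ?thesis using True L0 nonneg[of 0] by simp
    next
      case False
      then have j1: "j - 1 \<in> {1..K}" and rj: "real j - 1 = real (j - 1)" using j by auto
      show ?thesis using scaling[OF large x(2) j1] unfolding rj by (simp add: algebra_simps abs_le_iff)
    qed
    have "(l - \<eta>) * (x * g x)
        = (x * g x / real K) * (\<Sum>j\<in>{1..K}. L (j - 1)) - real K * (x * g x / real K * \<eta>)"
      unfolding l using K by (simp add: field_simps)
    also have "\<dots> = (\<Sum>j\<in>{1..K}. (x * g x / real K) * L (j - 1) - (x * g x / real K) * \<eta>)"
      by (simp add: sum_subtractf sum_distrib_left)
    also have "\<dots> = (\<Sum>j\<in>{1..K}. x / real K * ((L (j - 1) - \<eta>) * g x))"
      by (rule sum.cong) (auto simp: algebra_simps)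
    also have "\<dots>
        \<le> (\<Sum>j\<in>{1..K}. x / real K * g (x * (real j - 1) / real K))"
      using x approx by (intro sum_mono mult_left_mono) auto
    also have "\<dots> \<le> cost_potential g x" by (rule cost_potential_riemann(2)[OF x(1) K])
    finally show "(l - \<eta>) * (x * g x) \<le> cost_potential g x" .
  qed
  moreover have "x * g x \<le> \<epsilon> * M * g M" if small: "x < \<epsilon> * M"
  proof -
    have "\<epsilon> * M \<le> M" using eps x small by (simp add: mult_left_le_one_le)
    then have "x * g x \<le> \<epsilon> * M * g (\<epsilon> * M)" using mult_self_mono x small by simp
    also have "\<dots> \<le> \<epsilon> * M * g M"
      using \<open>\<epsilon> * M \<le> M\<close> x small by (intro mult_left_mono mono_onD[OF mono]) auto
    finally show ?thesis .
  qed
  moreover have "0 \<le> x * g x" "0 \<le> \<epsilon> * M * g M" using x gx gM eps by auto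
  ultimately show "(l - \<eta>) * (x * g x) \<le> cost_potential g x + \<epsilon> * M * g M"
    and "cost_potential g x \<le> (U + \<eta>) * (x * g x) + \<epsilon> * M * g M"
    using cost_potential_nonneg[OF x(1)] cost_potential_le[OF x(1)] l_bounds U_nonneg
    by (smt (verit) mult_left_le_one_le mult_nonneg_nonneg)+
qed

end

section \<open>Networks, equilibria and the price of anarchy\<close>

locale network =
  fixes E :: "'e set" and I :: "'i set" and P :: "'i \<Rightarrow> 'e list set"
    and c :: "'e \<Rightarrow> real \<Rightarrow> real"
  assumes finite_edges: "finite E" and finite_od_pairs: "finite I"
    and finite_paths: "\<And>i. i \<in> I \<Longrightarrow> finite (P i)"
    and paths_nonempty: "\<And>i. i \<in> I \<Longrightarrow> P i \<noteq> {}"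
    and paths_in_edges: "\<And>i p. i \<in> I \<Longrightarrow> p \<in> P i \<Longrightarrow> set p \<subseteq> E"
    and paths_disjoint: "\<And>i j. i \<in> I \<Longrightarrow> j \<in> I \<Longrightarrow> i \<noteq> j \<Longrightarrow> P i \<inter> P j = {}"
    and cost_function: "\<And>e. e \<in> E \<Longrightarrow> cost_function (c e)"
begin

abbreviation "A \<equiv> all_paths I P"

lemma finite_all_paths: "finite A"
  using finite_od_pairs finite_paths by (auto simp: all_paths_def)

lemma sum_all_paths: "(\<Sum>p\<in>A. h p) = (\<Sum>i\<in>I. \<Sum>p\<in>P i. h p)"
  unfolding all_paths_def
  by (rule sum.UNION_disjoint) (use finite_od_pairs finite_paths paths_disjoint in auto)

lemma mem_all_paths_iff: "p \<in> A \<longleftrightarrow> (\<exists>i\<in>I. p \<in> P i)"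
  by (auto simp: all_paths_def)

lemma path_subset_edges: "p \<in> A \<Longrightarrow> set p \<subseteq> E"
  using paths_in_edges by (auto simp: mem_all_paths_iff)

lemma od_pair_unique: "i \<in> I \<Longrightarrow> j \<in> I \<Longrightarrow> p \<in> P i \<Longrightarrow> p \<in> P j \<Longrightarrow> i = j"
  using paths_disjoint by blast

lemma cost_nonneg: "e \<in> E \<Longrightarrow> 0 \<le> x \<Longrightarrow> 0 \<le> c e x"
  using cost_function cost_function.nonneg by blast

lemma cost_mono: "e \<in> E \<Longrightarrow> 0 \<le> x \<Longrightarrow> x \<le> y \<Longrightarrow> c e x \<le> c e y"
  using cost_function cost_function.mono by (fastforce intro: mono_onD)

lemma sum_feasible_flow: "feasible_flow I P m f \<Longrightarrow> (\<Sum>p\<in>A. f p) = (\<Sum>i\<in>I. m i)"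
  by (simp add: sum_all_paths feasible_flow_def)

lemma edge_load_nonneg: "feasible_flow I P m f \<Longrightarrow> 0 \<le> edge_load I P f e"
  unfolding edge_load_def feasible_flow_def by (auto intro!: sum_nonneg)

lemma flow_le_edge_load:
  assumes "feasible_flow I P m f" "p \<in> A" "e \<in> set p"
  shows "f p \<le> edge_load I P f e"
  unfolding edge_load_def using assms finite_all_paths
  by (intro member_le_sum) (auto simp: feasible_flow_def)

lemma edge_load_le_inflow:
  assumes "feasible_flow I P m f"
  shows "edge_load I P f e \<le> (\<Sum>i\<in>I. m i)"
proof -
  have "edge_load I P f e \<le> (\<Sum>p\<in>A. f p)"
    unfolding edge_load_def using assms finite_all_paths
    by (intro sum_mono2) (auto simp: feasible_flow_def)
  then show ?thesis using sum_feasible_flow[OF assms] by simp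
qed

lemma flow_le_inflow:
  assumes "feasible_flow I P m f" "q \<in> A"
  shows "f q \<le> (\<Sum>i\<in>I. m i)"
proof -
  have "f q \<le> (\<Sum>p\<in>A. f p)"
    using assms finite_all_paths by (intro member_le_sum) (auto simp: feasible_flow_def)
  then show ?thesis using sum_feasible_flow[OF assms(1)] by simp
qed

lemma sum_edges_restrict_path:
  "p \<in> A \<Longrightarrow> (\<Sum>e\<in>E. if e \<in> set p then h e else 0) = (\<Sum>e\<in>set p. h e)"
  using sum.inter_filter[OF finite_edges, of h "\<lambda>e. e \<in> set p"] path_subset_edges
  by (simp add: Int_absorb1 Collect_conj_eq Int_commute inf_set_def[symmetric])

lemma edge_load_eq_sum: "edge_load I P f e = (\<Sum>p\<in>A. if e \<in> set p then f p else 0)"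
  unfolding edge_load_def by (rule sum.inter_filter[OF finite_all_paths])

lemma sum_edges_times_load:
  "(\<Sum>e\<in>E. h e * edge_load I P f e) = (\<Sum>p\<in>A. f p * (\<Sum>e\<in>set p. h e))"
proof -
  have "(\<Sum>e\<in>E. h e * edge_load I P f e) = (\<Sum>e\<in>E. \<Sum>p\<in>A. if e \<in> set p then h e * f p else 0)"
    unfolding edge_load_eq_sum by (simp add: sum_distrib_left if_distrib cong: if_cong)
  also have "\<dots> = (\<Sum>p\<in>A. \<Sum>e\<in>E. if e \<in> set p then h e * f p else 0)"
    by (rule sum.swap)
  also have "\<dots> = (\<Sum>p\<in>A. f p * (\<Sum>e\<in>set p. h e))"
  proof (rule sum.cong[OF refl])
    fix p assume "p \<in> A"
    then have "(\<Sum>e\<in>E. if e \<in> set p then h e * f p else 0) = (\<Sum>e\<in>set p. h e * f p)"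
      by (rule sum_edges_restrict_path)
    then show "(\<Sum>e\<in>E. if e \<in> set p then h e * f p else 0) = f p * (\<Sum>e\<in>set p. h e)"
      by (simp add: sum_distrib_left mult.commute)
  qed
  finally show ?thesis .
qed

lemma path_cost_nonneg:
  assumes "feasible_flow I P m f" "p \<in> A"
  shows "0 \<le> path_cost c I P f p"
  unfolding path_cost_def
  using path_subset_edges[OF assms(2)] edge_load_nonneg[OF assms(1)] by (intro sum_nonneg cost_nonneg) auto

lemma social_cost_nonneg:
  assumes "feasible_flow I P m f"
  shows "0 \<le> social_cost E c (edge_load I P f)"
  unfolding social_cost_def
  using edge_load_nonneg[OF assms] by (intro sum_nonneg mult_nonneg_nonneg cost_nonneg) auto

lemma edge_social_cost_le:
  assumes "feasible_flow I P m f" "e \<in> E"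
  shows "edge_load I P f e * c e (edge_load I P f e) \<le> social_cost E c (edge_load I P f)"
  unfolding social_cost_def using assms finite_edges edge_load_nonneg cost_nonneg
  by (intro member_le_sum mult_nonneg_nonneg) auto

end

lemma exists_neg_near_zero:
  fixes h :: "real \<Rightarrow> real"
  assumes "continuous_on {0..a} h" "0 < a" "h 0 < 0"
  shows "\<exists>\<epsilon>. 0 < \<epsilon> \<and> \<epsilon> \<le> a \<and> h \<epsilon> < 0"
proof -
  obtain d where d: "d > 0" "\<And>x. x \<in> {0..a} \<Longrightarrow> dist x 0 < d \<Longrightarrow> dist (h x) (h 0) < - h 0"
    using assms unfolding continuous_on_iff
    by (metis atLeastAtMost_iff neg_0_less_iff_less order_refl less_imp_le)
  define \<epsilon> where "\<epsilon> = min a (d / 2)"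
  have "dist (h \<epsilon>) (h 0) < - h 0" using d assms by (intro d(2)) (auto simp: \<epsilon>_def dist_real_def)
  then have "h \<epsilon> < 0" by (simp add: dist_real_def)
  then show ?thesis using assms d by (intro exI[of _ \<epsilon>]) (auto simp: \<epsilon>_def)
qed

lemma steep_threshold_arith:
  fixes D n a Cm \<tau> M C :: real
  assumes "D \<le> n * (a * Cm)" "0 \<le> n" "0 \<le> a" "0 < Cm" "0 < \<tau>" "0 < M"
    and "(n * n * a / \<tau> + n * a + 1) * Cm \<le> C"
  shows "D < C" "n * D * M < \<tau> * M * C"
proof -
  have "0 \<le> n * n * a / \<tau> * Cm" using assms by simp
  moreover have "(n * n * a / \<tau> + n * a + 1) * Cm = n * n * a / \<tau> * Cm + n * (a * Cm) + Cm"
    by (simp add: algebra_simps)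
  ultimately show "D < C" using assms(1,4,7) by linarith
  have "n * D * M \<le> n * (n * (a * Cm)) * M" using assms by (intro mult_right_mono mult_left_mono) auto
  also have "\<dots> < \<tau> * M * ((n * n * a / \<tau> + n * a + 1) * Cm)"
    using assms by (simp add: field_simps add_pos_nonneg mult_nonneg_nonneg)
  also have "\<dots> \<le> \<tau> * M * C" using assms by simp
  finally show "n * D * M < \<tau> * M * C" .
qed

lemma scaled_le_one_plus:
  fixes a L l \<tau> \<kappa> lz :: real
  assumes "(l - \<tau>) * a \<le> (l + 2 * \<tau>) * L + \<tau> * \<kappa> * L"
    and "lz / 2 \<le> l - \<tau>" "0 < lz" "0 \<le> L" "0 \<le> \<tau>" "0 \<le> \<kappa>"
  shows "a \<le> (1 + 2 * \<tau> * (3 + \<kappa>) / lz) * L"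
proof -
  have pos: "0 < l - \<tau>" using assms by linarith
  have "(l - \<tau>) * a \<le> (l - \<tau>) * L + \<tau> * (3 + \<kappa>) * L" using assms(1) by (simp add: algebra_simps)
  then have "a \<le> L + \<tau> * (3 + \<kappa>) * L / (l - \<tau>)" using pos by (simp add: field_simps)
  also have "\<tau> * (3 + \<kappa>) * L / (l - \<tau>) \<le> \<tau> * (3 + \<kappa>) * L / (lz / 2)"
    using assms pos by (intro divide_left_mono) auto
  finally show ?thesis by (simp add: algebra_simps)
qed

context network
begin

definition supported_flows :: "('i \<Rightarrow> real) \<Rightarrow> ('e list \<Rightarrow> real) set" where
  "supported_flows m = {f. feasible_flow I P m f \<and> (\<forall>p. p \<notin> A \<longrightarrow> f p = 0)}"

definition beckmann_potential :: "('e list \<Rightarrow> real) \<Rightarrow> real" where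
  "beckmann_potential f = (\<Sum>e\<in>E. cost_potential (c e) (edge_load I P f e))"

lemma supported_flows_nonempty:
  assumes "\<And>i. i \<in> I \<Longrightarrow> m i \<ge> 0"
  shows "supported_flows m \<noteq> {}"
proof -
  define f where "f p = (\<Sum>i\<in>I. if p \<in> P i then m i / card (P i) else 0)" for p
  have "(\<Sum>p\<in>P j. f p) = m j" if j: "j \<in> I" for j
  proof -
    have "(\<Sum>p\<in>P j. f p) = (\<Sum>i\<in>I. \<Sum>p\<in>P j. if p \<in> P i then m i / card (P i) else 0)"
      unfolding f_def by (rule sum.swap)
    also have "\<dots> = (\<Sum>i\<in>I. if i = j then m i else 0)"
    proof (rule sum.cong[OF refl])
      fix i assume i: "i \<in> I"
      show "(\<Sum>p\<in>P j. if p \<in> P i then m i / card (P i) else 0) = (if i = j then m i else 0)"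
      proof (cases "i = j")
        case True
        then show ?thesis using finite_paths[OF j] paths_nonempty[OF j] by simp
      next
        case False
        then show ?thesis using paths_disjoint[OF i j] by (auto intro!: sum.neutral)
      qed
    qed
    also have "\<dots> = m j" using j finite_od_pairs by simp
    finally show ?thesis .
  qed
  then have "f \<in> supported_flows m"
    using assms unfolding supported_flows_def feasible_flow_def f_def
    by (auto simp: mem_all_paths_iff intro!: sum_nonneg sum.neutral)
  then show ?thesis by blast
qed

lemma compact_supported_flows:
  assumes "\<And>i. i \<in> I \<Longrightarrow> m i \<ge> 0"
  shows "compact (supported_flows m)"
proof -
  define box where "box = PiE UNIV (\<lambda>p. if p \<in> A then {0..(\<Sum>i\<in>I. m i)} else {0::real})"
  have "compactin (product_topology (\<lambda>_. euclidean) UNIV) box"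
    unfolding box_def compactin_PiE by auto
  then have "compact box" by (simp add: euclidean_product_topology)
  moreover have "closed (\<Inter>i\<in>I. {f::'e list \<Rightarrow> real. (\<Sum>p\<in>P i. f p) = m i})"
    by (intro closed_INT ballI closed_Collect_eq continuous_intros continuous_on_product_coordinates)
  moreover have "supported_flows m = box \<inter> (\<Inter>i\<in>I. {f. (\<Sum>p\<in>P i. f p) = m i})"
    using flow_le_inflow
    unfolding supported_flows_def box_def feasible_flow_def
    by (auto simp: PiE_iff feasible_flow_def split: if_splits)
  ultimately show ?thesis by (simp add: compact_Int_closed)
qed

lemma continuous_on_beckmann_potential: "continuous_on (supported_flows m) beckmann_potential"
  unfolding beckmann_potential_def
proof (intro continuous_on_sum)
  fix e assume e: "e \<in> E"
  have load: "continuous_on UNIV (\<lambda>f. edge_load I P f e)"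
    unfolding edge_load_def by (intro continuous_intros continuous_on_product_coordinates)
  show "continuous_on (supported_flows m) (\<lambda>f. cost_potential (c e) (edge_load I P f e))"
    by (rule continuous_on_compose2[OF cost_function.continuous_on_cost_potential[OF cost_function[OF e]]
          continuous_on_subset[OF load]])
      (use edge_load_nonneg in \<open>auto simp: supported_flows_def\<close>)
qed

definition shift_flow :: "'e list \<Rightarrow> 'e list \<Rightarrow> real \<Rightarrow> ('e list \<Rightarrow> real) \<Rightarrow> 'e list \<Rightarrow> real" where
  "shift_flow p p' \<epsilon> f q = f q + (if q = p' then \<epsilon> else 0) - (if q = p then \<epsilon> else 0)"

definition path_indicator_diff :: "'e list \<Rightarrow> 'e list \<Rightarrow> 'e \<Rightarrow> real" where
  "path_indicator_diff p p' e = (if e \<in> set p' then 1 else 0) - (if e \<in> set p then 1 else 0)"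

lemma edge_load_shift_flow:
  assumes "p \<in> A" "p' \<in> A"
  shows "edge_load I P (shift_flow p p' \<epsilon> f) e = edge_load I P f e + path_indicator_diff p p' e * \<epsilon>"
proof -
  have "edge_load I P (shift_flow p p' \<epsilon> f) e = edge_load I P f e
      + edge_load I P (\<lambda>q. if q = p' then \<epsilon> else 0) e - edge_load I P (\<lambda>q. if q = p then \<epsilon> else 0) e"
    unfolding edge_load_def shift_flow_def by (simp add: sum.distrib sum_subtractf)
  also have "\<dots> = edge_load I P f e + path_indicator_diff p p' e * \<epsilon>"
    unfolding edge_load_def path_indicator_diff_def
    using finite_all_paths assms by (simp add: sum.delta algebra_simps)
  finally show ?thesis .
qed

lemma shift_flow_supported:
  assumes f: "f \<in> supported_flows m" and i: "i \<in> I" and p: "p \<in> P i" "p' \<in> P i" "p \<noteq> p'"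
    and \<epsilon>: "0 \<le> \<epsilon>" "\<epsilon> \<le> f p"
  shows "shift_flow p p' \<epsilon> f \<in> supported_flows m"
proof -
  have feasible: "feasible_flow I P m f" and zero: "\<And>q. q \<notin> A \<Longrightarrow> f q = 0"
    using f by (auto simp: supported_flows_def)
  have "(\<Sum>q\<in>P j. shift_flow p p' \<epsilon> f q) = m j" if j: "j \<in> I" for j
  proof -
    have "(\<Sum>q\<in>P j. shift_flow p p' \<epsilon> f q) = (\<Sum>q\<in>P j. f q)
        + (\<Sum>q\<in>P j. if q = p' then \<epsilon> else 0) - (\<Sum>q\<in>P j. if q = p then \<epsilon> else 0)"
      unfolding shift_flow_def by (simp add: sum.distrib sum_subtractf)
    also have "\<dots> = m j"
    proof (cases "j = i")
      case True
      then show ?thesis using feasible j p finite_paths[OF j] by (simp add: feasible_flow_def)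
    next
      case False
      then have "p \<notin> P j" "p' \<notin> P j" using od_pair_unique[OF i j] p by auto
      then show ?thesis using feasible j finite_paths[OF j] by (simp add: feasible_flow_def)
    qed
    finally show ?thesis .
  qed
  moreover have "p \<in> A" "p' \<in> A" using i p by (auto simp: mem_all_paths_iff)
  ultimately show ?thesis
    using feasible zero \<epsilon> p(3)
    unfolding supported_flows_def feasible_flow_def shift_flow_def by auto
qed

definition shift_slope :: "'e list \<Rightarrow> 'e list \<Rightarrow> ('e list \<Rightarrow> real) \<Rightarrow> real \<Rightarrow> real" where
  "shift_slope p p' f \<epsilon> =
    (\<Sum>e\<in>E. path_indicator_diff p p' e * c e (edge_load I P f e + path_indicator_diff p p' e * \<epsilon>))"

lemma shifted_load_nonneg:
  assumes "feasible_flow I P m f" "p \<in> A" "0 \<le> \<epsilon>" "\<epsilon> \<le> f p"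
  shows "0 \<le> edge_load I P f e + path_indicator_diff p p' e * \<epsilon>"
  using flow_le_edge_load[OF assms(1,2), of e] edge_load_nonneg[OF assms(1), of e] assms(3,4)
  unfolding path_indicator_diff_def by auto

lemma continuous_on_shift_slope:
  assumes "feasible_flow I P m f" "p \<in> A"
  shows "continuous_on {0..f p} (shift_slope p p' f)"
  unfolding shift_slope_def
proof (intro continuous_on_sum continuous_on_mult continuous_on_const)
  fix e assume e: "e \<in> E"
  show "continuous_on {0..f p} (\<lambda>\<epsilon>. c e (edge_load I P f e + path_indicator_diff p p' e * \<epsilon>))"
    by (rule continuous_on_compose2[OF cost_function.continuous[OF cost_function[OF e]]])
      (auto intro!: continuous_intros shifted_load_nonneg[OF assms])
qed

lemma shift_slope_0:
  assumes "p \<in> A" "p' \<in> A"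
  shows "shift_slope p p' f 0 = path_cost c I P f p' - path_cost c I P f p"
proof -
  have "shift_slope p p' f 0 = (\<Sum>e\<in>E. if e \<in> set p' then c e (edge_load I P f e) else 0)
      - (\<Sum>e\<in>E. if e \<in> set p then c e (edge_load I P f e) else 0)"
    unfolding shift_slope_def path_indicator_diff_def sum_subtractf[symmetric] by (intro sum.cong) auto
  then show ?thesis
    unfolding path_cost_def sum_edges_restrict_path[OF assms(1)] sum_edges_restrict_path[OF assms(2)] .
qed

lemma beckmann_potential_shift_le:
  assumes f: "feasible_flow I P m f" and p: "p \<in> A" "p' \<in> A" and \<epsilon>: "0 \<le> \<epsilon>" "\<epsilon> \<le> f p"
  shows "beckmann_potential (shift_flow p p' \<epsilon> f) - beckmann_potential f \<le> \<epsilon> * shift_slope p p' f \<epsilon>"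
proof -
  define x where "x e = edge_load I P f e" for e
  define \<delta> where "\<delta> = path_indicator_diff p p'"
  have "beckmann_potential (shift_flow p p' \<epsilon> f) - beckmann_potential f
      = (\<Sum>e\<in>E. cost_potential (c e) (x e + \<delta> e * \<epsilon>) - cost_potential (c e) (x e))"
    unfolding beckmann_potential_def edge_load_shift_flow[OF p] x_def \<delta>_def
    by (simp add: sum_subtractf)
  also have "\<dots> \<le> (\<Sum>e\<in>E. c e (x e + \<delta> e * \<epsilon>) * (\<delta> e * \<epsilon>))"
  proof (rule sum_mono)
    fix e assume e: "e \<in> E"
    have "c e (x e + \<delta> e * \<epsilon>) * (x e - (x e + \<delta> e * \<epsilon>))
        \<le> cost_potential (c e) (x e) - cost_potential (c e) (x e + \<delta> e * \<epsilon>)"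
      by (rule cost_function.cost_potential_supergradient[OF cost_function[OF e]])
        (use shifted_load_nonneg[OF f p(1) \<epsilon>] edge_load_nonneg[OF f] in \<open>auto simp: x_def \<delta>_def\<close>)
    then show "cost_potential (c e) (x e + \<delta> e * \<epsilon>) - cost_potential (c e) (x e)
        \<le> c e (x e + \<delta> e * \<epsilon>) * (\<delta> e * \<epsilon>)"
      by (simp add: algebra_simps)
  qed
  also have "\<dots> = \<epsilon> * shift_slope p p' f \<epsilon>"
    unfolding shift_slope_def x_def \<delta>_def by (simp add: sum_distrib_left algebra_simps)
  finally show ?thesis .
qed

text \<open>Shifting a little flow from a used path to a strictly cheaper one of the same OD pair
  would decrease the potential.\<close>
lemma beckmann_minimizer_wardrop_eq:
  assumes f: "f \<in> supported_flows m"
    and min: "\<And>g. g \<in> supported_flows m \<Longrightarrow> beckmann_potential f \<le> beckmann_potential g"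
  shows "wardrop_eq c I P m f"
proof (unfold wardrop_eq_def, intro conjI ballI impI)
  show feasible: "feasible_flow I P m f" using f by (simp add: supported_flows_def)
  fix i p p' assume i: "i \<in> I" and p: "p \<in> P i" and p': "p' \<in> P i" and pos: "0 < f p"
  show "path_cost c I P f p \<le> path_cost c I P f p'"
  proof (rule ccontr)
    assume cheaper: "\<not> path_cost c I P f p \<le> path_cost c I P f p'"
    have pA: "p \<in> A" and p'A: "p' \<in> A" using i p p' by (auto simp: mem_all_paths_iff)
    obtain \<epsilon> where \<epsilon>: "0 < \<epsilon>" "\<epsilon> \<le> f p" "shift_slope p p' f \<epsilon> < 0"
      using exists_neg_near_zero[OF continuous_on_shift_slope[OF feasible pA, of p'] pos]
        shift_slope_0[OF pA p'A, of f] cheaper by auto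
    have "beckmann_potential (shift_flow p p' \<epsilon> f) - beckmann_potential f < 0"
      using beckmann_potential_shift_le[OF feasible pA p'A _ \<epsilon>(2)] \<epsilon> mult_pos_neg[of \<epsilon>] by force
    moreover have "p \<noteq> p'" using cheaper by auto
    then have "beckmann_potential f \<le> beckmann_potential (shift_flow p p' \<epsilon> f)"
      using \<epsilon> by (intro min shift_flow_supported[OF f i p p']) auto
    ultimately show False by simp
  qed
qed

lemma exists_wardrop_eq:
  assumes "\<And>i. i \<in> I \<Longrightarrow> m i \<ge> 0"
  shows "\<exists>f. wardrop_eq c I P m f"
proof -
  obtain f where "f \<in> supported_flows m"
    and "\<And>g. g \<in> supported_flows m \<Longrightarrow> beckmann_potential f \<le> beckmann_potential g"
    using continuous_attains_inf[OF compact_supported_flows supported_flows_nonempty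
        continuous_on_beckmann_potential] assms by metis
  then show ?thesis using beckmann_minimizer_wardrop_eq by blast
qed

lemma path_cost_le_avoiding:
  assumes f: "feasible_flow I P m f" and i: "i \<in> I" and q: "q \<in> P i" "set q \<inter> Ei = {}"
  shows "path_cost c I P f q \<le> (\<Sum>e\<in>E - Ei. c e (\<Sum>i\<in>I. m i))"
proof -
  have qE: "set q \<subseteq> E - Ei" using paths_in_edges[OF i q(1)] q(2) by auto
  have "path_cost c I P f q \<le> (\<Sum>e\<in>set q. c e (\<Sum>i\<in>I. m i))"
    unfolding path_cost_def using qE edge_load_nonneg[OF f] edge_load_le_inflow[OF f]
    by (intro sum_mono cost_mono) auto
  also have "\<dots> \<le> (\<Sum>e\<in>E - Ei. c e (\<Sum>i\<in>I. m i))"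
    using qE finite_edges edge_load_nonneg[OF f] edge_load_le_inflow[OF f]
    by (intro sum_mono2 cost_nonneg) (auto intro: order_trans)
  finally show ?thesis .
qed

lemma wardrop_feasible: "wardrop_eq c I P m f \<Longrightarrow> feasible_flow I P m f"
  by (simp add: wardrop_eq_def)

context
  fixes m :: "'i \<Rightarrow> real" and f :: "'e list \<Rightarrow> real" and D :: real
  assumes wardrop: "wardrop_eq c I P m f"
    and cheap_path: "\<And>i. i \<in> I \<Longrightarrow> \<exists>q\<in>P i. path_cost c I P f q \<le> D"
begin

lemma used_path_cost_le:
  assumes "p \<in> A" "0 < f p"
  shows "path_cost c I P f p \<le> D"
proof -
  obtain i where i: "i \<in> I" "p \<in> P i" using assms by (auto simp: mem_all_paths_iff)
  obtain q where q: "q \<in> P i" "path_cost c I P f q \<le> D" using cheap_path[OF i(1)] by blast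
  have "path_cost c I P f p \<le> path_cost c I P f q" using wardrop i q assms unfolding wardrop_eq_def by blast
  then show ?thesis using q by simp
qed

lemma loaded_edge_cost_le:
  assumes e: "e \<in> E" "0 < edge_load I P f e"
  shows "c e (edge_load I P f e) \<le> D"
proof -
  obtain p where p: "p \<in> A" "e \<in> set p" "0 < f p"
  proof -
    have "\<not> (\<forall>p\<in>{p \<in> A. e \<in> set p}. f p \<le> 0)"
      using e(2) unfolding edge_load_def by (meson not_le sum_nonpos)
    then show ?thesis using that by auto
  qed
  have "c e (edge_load I P f e) \<le> path_cost c I P f p"
    unfolding path_cost_def using p path_subset_edges[OF p(1)] edge_load_nonneg[OF wardrop_feasible[OF wardrop]]
    by (intro member_le_sum cost_nonneg) auto
  then show ?thesis using used_path_cost_le[OF p(1,3)] by simp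
qed

lemma cheap_bound_nonneg: "I \<noteq> {} \<Longrightarrow> 0 \<le> D"
  using cheap_path path_cost_nonneg[OF wardrop_feasible[OF wardrop]] by (force simp: mem_all_paths_iff)

lemma od_pair_weighted_cost_le:
  assumes i: "i \<in> I" and y: "feasible_flow I P m y"
    and W_nonneg: "\<And>p. p \<in> A \<Longrightarrow> 0 \<le> W p"
    and W_ge: "\<And>p. p \<in> A \<Longrightarrow> min (path_cost c I P f p) D \<le> W p"
    and W_used: "\<And>p. p \<in> A \<Longrightarrow> 0 < f p \<Longrightarrow> W p = path_cost c I P f p"
  shows "(\<Sum>p\<in>P i. f p * W p) \<le> (\<Sum>p\<in>P i. y p * W p)"
proof (cases "\<exists>p\<in>P i. 0 < f p")
  case False
  have "f p = 0" if "p \<in> P i" for p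
    using wardrop_feasible[OF wardrop] False that i unfolding feasible_flow_def by (force simp: mem_all_paths_iff)
  then have "(\<Sum>p\<in>P i. f p * W p) = 0" by simp
  also have "\<dots> \<le> (\<Sum>p\<in>P i. y p * W p)"
    using y W_nonneg i unfolding feasible_flow_def
    by (intro sum_nonneg mult_nonneg_nonneg) (auto simp: mem_all_paths_iff)
  finally show ?thesis .
next
  case True
  then obtain p0 where p0: "p0 \<in> P i" "0 < f p0" by blast
  define d where "d = path_cost c I P f p0"
  have p0A: "p0 \<in> A" using p0 i by (auto simp: mem_all_paths_iff)
  have dD: "d \<le> D" using used_path_cost_le[OF p0A p0(2)] d_def by simp
  have d_le: "d \<le> path_cost c I P f p" if "p \<in> P i" for p
    using wardrop i p0 that unfolding wardrop_eq_def d_def by blast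
  have "(\<Sum>p\<in>P i. f p * W p) = (\<Sum>p\<in>P i. f p * d)"
  proof (intro sum.cong refl)
    fix p assume p: "p \<in> P i"
    then have pA: "p \<in> A" using i by (auto simp: mem_all_paths_iff)
    show "f p * W p = f p * d"
    proof (cases "0 < f p")
      case True
      have "path_cost c I P f p \<le> d" using wardrop i p0 p True unfolding wardrop_eq_def d_def by blast
      then show ?thesis using W_used[OF pA True] d_le[OF p] by simp
    qed (use wardrop_feasible[OF wardrop] pA in \<open>auto simp: feasible_flow_def\<close>)
  qed
  also have "\<dots> = m i * d"
    using wardrop_feasible[OF wardrop] i by (simp add: feasible_flow_def sum_distrib_right[symmetric])
  also have "\<dots> = (\<Sum>p\<in>P i. y p * d)"
    using y i by (simp add: feasible_flow_def sum_distrib_right[symmetric])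
  also have "\<dots> \<le> (\<Sum>p\<in>P i. y p * W p)"
  proof (intro sum_mono mult_left_mono)
    fix p assume p: "p \<in> P i"
    then have pA: "p \<in> A" using i by (auto simp: mem_all_paths_iff)
    show "0 \<le> y p" using y pA by (simp add: feasible_flow_def)
    show "d \<le> W p" using W_ge[OF pA] d_le[OF p] dD by linarith
  qed
  finally show ?thesis .
qed

text \<open>Truncating the edge costs at \<open>D\<close> does not change the cost of used paths, and keeps the
  contribution of very expensive unused edges under control.\<close>
lemma truncated_variational_inequality:
  assumes y: "feasible_flow I P m y" and I: "I \<noteq> {}"
  shows "0 \<le> (\<Sum>e\<in>E. min (c e (edge_load I P f e)) D * (edge_load I P y e - edge_load I P f e))"
proof -
  define ch where "ch e = min (c e (edge_load I P f e)) D" for e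
  define W where "W p = (\<Sum>e\<in>set p. ch e)" for p
  have W_nonneg: "0 \<le> W p" if "p \<in> A" for p
    unfolding W_def ch_def using cheap_bound_nonneg[OF I] path_subset_edges[OF that]
      edge_load_nonneg[OF wardrop_feasible[OF wardrop]] by (auto intro!: sum_nonneg cost_nonneg)
  have W_ge: "min (path_cost c I P f p) D \<le> W p" if p: "p \<in> A" for p
  proof (cases "\<exists>e\<in>set p. D \<le> c e (edge_load I P f e)")
    case True
    then obtain e where e: "e \<in> set p" "D \<le> c e (edge_load I P f e)" by blast
    have "ch e \<le> W p"
      unfolding W_def ch_def using e path_subset_edges[OF p] cheap_bound_nonneg[OF I]
        edge_load_nonneg[OF wardrop_feasible[OF wardrop]]
      by (intro member_le_sum) (auto intro: cost_nonneg)
    then show ?thesis using e unfolding ch_def by simp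
  next
    case False
    then have "W p = path_cost c I P f p" unfolding W_def path_cost_def ch_def by (intro sum.cong) auto
    then show ?thesis by simp
  qed
  have W_used: "W p = path_cost c I P f p" if p: "p \<in> A" "0 < f p" for p
    unfolding W_def path_cost_def ch_def
  proof (intro sum.cong refl)
    fix e assume e: "e \<in> set p"
    have "0 < edge_load I P f e" using flow_le_edge_load[OF wardrop_feasible[OF wardrop] p(1) e] p by simp
    then show "min (c e (edge_load I P f e)) D = c e (edge_load I P f e)"
      using loaded_edge_cost_le path_subset_edges[OF p(1)] e by auto
  qed
  have "(\<Sum>p\<in>P i. f p * W p) \<le> (\<Sum>p\<in>P i. y p * W p)" if i: "i \<in> I" for i
    by (rule od_pair_weighted_cost_le[OF i y W_nonneg W_ge W_used])
  then have "(\<Sum>e\<in>E. ch e * edge_load I P f e) \<le> (\<Sum>e\<in>E. ch e * edge_load I P y e)"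
    unfolding sum_edges_times_load W_def[symmetric] sum_all_paths by (rule sum_mono)
  then show ?thesis unfolding ch_def[symmetric] by (simp add: right_diff_distrib sum_subtractf)
qed

lemma equilibrium_social_cost_le:
  assumes "I \<noteq> {}"
  shows "social_cost E c (edge_load I P f) \<le> real (card E) * D * (\<Sum>i\<in>I. m i)"
proof -
  have M: "0 \<le> (\<Sum>i\<in>I. m i)"
    using edge_load_nonneg[OF wardrop_feasible[OF wardrop]] edge_load_le_inflow[OF wardrop_feasible[OF wardrop]] by (rule order_trans)
  have "edge_load I P f e * c e (edge_load I P f e) \<le> (\<Sum>i\<in>I. m i) * D" if e: "e \<in> E" for e
  proof (cases "0 < edge_load I P f e")
    case True
    then show ?thesis
      using loaded_edge_cost_le[OF e] edge_load_le_inflow[OF wardrop_feasible[OF wardrop]] M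
        cost_nonneg[OF e edge_load_nonneg[OF wardrop_feasible[OF wardrop]]]
      by (intro mult_mono) auto
  next
    case False
    then show ?thesis
      using edge_load_nonneg[OF wardrop_feasible[OF wardrop], of e] cheap_bound_nonneg[OF assms] M by simp
  qed
  then have "social_cost E c (edge_load I P f) \<le> (\<Sum>e\<in>E. (\<Sum>i\<in>I. m i) * D)"
    unfolding social_cost_def by (rule sum_mono)
  then show ?thesis by (simp add: mult.commute mult.left_commute)
qed

end

context
  fixes m :: "'i \<Rightarrow> real" and f y :: "'e list \<Rightarrow> real" and M D :: real
    and steep tight :: "'e set" and \<tau> B Z :: real
    and K :: nat and L :: "nat \<Rightarrow> real" and U l :: real
  assumes wardrop: "wardrop_eq c I P m f" and y: "feasible_flow I P m y" and I: "I \<noteq> {}"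
    and M: "M = (\<Sum>i\<in>I. m i)" and D: "D = (\<Sum>e\<in>E - steep. c e M)"
    and steep: "steep \<subseteq> E" and tight: "tight \<subseteq> E - steep"
    and avoiding: "\<And>i. i \<in> I \<Longrightarrow> \<exists>q\<in>P i. set q \<inter> steep = {}"
    and \<tau>: "0 < \<tau>" "\<tau> \<le> 1" and K: "0 < K" and B: "0 \<le> B" and Z: "0 \<le> Z"
    and tight_bounded: "\<And>e. e \<in> tight \<Longrightarrow> c e M \<le> B"
    and negligible: "\<And>e. e \<in> E - steep - tight \<Longrightarrow> c e M \<le> \<tau> * Z"
    and steep_large: "\<And>e. e \<in> steep \<Longrightarrow>
      D < c e (\<tau> * M) \<and> real (card E) * D * M < \<tau> * M * c e (\<tau> * M)"
    and scaling: "\<And>e z k. e \<in> tight \<Longrightarrow> \<tau> * M \<le> z \<Longrightarrow> z \<le> M \<Longrightarrow> k \<in> {1..K} \<Longrightarrow>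
      \<bar>c e (z * real k / real K) - L k * c e z\<bar> \<le> \<tau> * c e z"
    and L0: "L 0 = 0"
    and U: "U = (\<Sum>k\<in>{1..K}. L k) / real K" and l: "l = (\<Sum>k\<in>{1..K}. L (k - 1)) / real K"
    and l_bounds: "0 \<le> l - \<tau>" "l - \<tau> \<le> 1" and U_nonneg: "0 \<le> U + \<tau>"
    and y_cheap: "social_cost E c (edge_load I P y) \<le> real (card E) * D * M"
begin

lemma cheap_path_avoiding: "i \<in> I \<Longrightarrow> \<exists>q\<in>P i. path_cost c I P f q \<le> D"
  using avoiding path_cost_le_avoiding[OF wardrop_feasible[OF wardrop]] unfolding D M by blast

lemma load_bounds:
  "0 \<le> edge_load I P f e" "edge_load I P f e \<le> M" "0 \<le> edge_load I P y e" "edge_load I P y e \<le> M"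
  using edge_load_nonneg[OF wardrop_feasible[OF wardrop]] edge_load_le_inflow[OF wardrop_feasible[OF wardrop]]
    edge_load_nonneg[OF y] edge_load_le_inflow[OF y] M by auto

lemma inflow_nonneg: "0 \<le> M"
  using load_bounds(1,2) by (rule order_trans)

lemma steep_edge_cost_small:
  assumes e: "e \<in> steep"
  shows "edge_load I P f e * c e (edge_load I P f e) \<le> \<tau> * M * D"
proof (cases "0 < edge_load I P f e")
  case True
  have eE: "e \<in> E" using e steep by auto
  have cost: "c e (edge_load I P f e) \<le> D"
    using loaded_edge_cost_le[OF wardrop cheap_path_avoiding eE True] .
  have "edge_load I P f e < \<tau> * M"
  proof (rule ccontr)
    assume "\<not> edge_load I P f e < \<tau> * M"
    then have "c e (\<tau> * M) \<le> c e (edge_load I P f e)"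
      using \<tau> inflow_nonneg by (intro cost_mono[OF eE]) auto
    then show False using steep_large[OF e] cost by simp
  qed
  then show ?thesis
    using cost load_bounds(1) cost_nonneg[OF eE load_bounds(1)] \<tau> inflow_nonneg
    by (intro mult_mono) auto
next
  case False
  then show ?thesis
    using load_bounds(1)[of e] \<tau> inflow_nonneg cheap_bound_nonneg[OF wardrop cheap_path_avoiding I]
    by simp
qed

lemma steep_edge_truncated_term_small:
  assumes e: "e \<in> steep"
  shows "min (c e (edge_load I P f e)) D * (edge_load I P y e - edge_load I P f e) \<le> \<tau> * M * D"
proof -
  have eE: "e \<in> E" using e steep by auto
  define ch where "ch = min (c e (edge_load I P f e)) D"
  have ch: "0 \<le> ch" "ch \<le> D"
    unfolding ch_def using cheap_bound_nonneg[OF wardrop cheap_path_avoiding I]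
      cost_nonneg[OF eE load_bounds(1)] by auto
  have "edge_load I P y e < \<tau> * M"
  proof (rule ccontr)
    assume "\<not> edge_load I P y e < \<tau> * M"
    then have "\<tau> * M * c e (\<tau> * M) \<le> edge_load I P y e * c e (edge_load I P y e)"
      using \<tau> inflow_nonneg cost_nonneg[OF eE, of "\<tau> * M"] load_bounds(3)[of e]
      by (intro mult_mono cost_mono[OF eE]) auto
    also have "\<dots> \<le> social_cost E c (edge_load I P y)" by (rule edge_social_cost_le[OF y eE])
    finally show False using steep_large[OF e] y_cheap by simp
  qed
  have "ch * (edge_load I P y e - edge_load I P f e) \<le> ch * edge_load I P y e"
    using ch load_bounds(1)[of e] by (simp add: mult_left_mono)
  also have "\<dots> \<le> D * (\<tau> * M)"
    using ch load_bounds(3)[of e] \<open>edge_load I P y e < \<tau> * M\<close> by (intro mult_mono) auto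
  finally show ?thesis unfolding ch_def by (simp add: mult.commute mult.left_commute)
qed

lemma flat_edge_potential_bounds:
  assumes e: "e \<in> E - steep"
  shows "(l - \<tau>) * (edge_load I P f e * c e (edge_load I P f e))
           \<le> cost_potential (c e) (edge_load I P f e) + (\<tau> * M * B + \<tau> * M * Z)" (is ?lower)
    and "cost_potential (c e) (edge_load I P y e)
           \<le> (U + \<tau>) * (edge_load I P y e * c e (edge_load I P y e)) + (\<tau> * M * B + \<tau> * M * Z)"
      (is ?upper)
proof -
  interpret cost_function "c e" using e cost_function by auto
  have errors: "0 \<le> \<tau> * M * B" "0 \<le> \<tau> * M * Z" using \<tau> inflow_nonneg B Z by auto
  have "?lower \<and> ?upper"
  proof (cases "e \<in> tight")
    case True
    have "\<tau> * M * c e M \<le> \<tau> * M * B"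
      using tight_bounded[OF True] \<tau> inflow_nonneg by (intro mult_left_mono) auto
    moreover note cost_potential_regular_bounds[OF K _ _ \<tau> less_imp_le[OF \<tau>(1)] scaling[OF True] L0 U l
        l_bounds U_nonneg]
    ultimately show ?thesis using load_bounds[of e] errors by (smt (verit))
  next
    case False
    have "M * c e M \<le> M * (\<tau> * Z)"
      using negligible[of e] e False inflow_nonneg by (intro mult_left_mono) auto
    then have "M * c e M \<le> \<tau> * M * Z" by (simp add: algebra_simps)
    then have small: "x * c e x \<le> \<tau> * M * Z" if "0 \<le> x" "x \<le> M" for x
      using mult_self_mono[OF that] by simp
    show ?thesis
      using small[OF load_bounds(1,2)] small[OF load_bounds(3,4)] errors l_bounds U_nonneg
        cost_potential_nonneg[OF load_bounds(1)] cost_potential_le[OF load_bounds(3)]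
        mult_nonneg_nonneg[OF load_bounds(3) nonneg[OF load_bounds(3)]]
        mult_nonneg_nonneg[OF load_bounds(1) nonneg[OF load_bounds(1)]]
      by (smt (verit) mult_left_le_one_le mult_nonneg_nonneg)
  qed
  then show ?lower ?upper by auto
qed

lemma flat_edge_truncated_term_le:
  assumes e: "e \<in> E - steep"
  shows "min (c e (edge_load I P f e)) D * (edge_load I P y e - edge_load I P f e)
    \<le> cost_potential (c e) (edge_load I P y e) - cost_potential (c e) (edge_load I P f e)"
proof -
  have eE: "e \<in> E" using e by auto
  have "min (c e (edge_load I P f e)) D * (edge_load I P y e - edge_load I P f e)
      \<le> c e (edge_load I P f e) * (edge_load I P y e - edge_load I P f e)"
  proof (cases "0 < edge_load I P f e")
    case True
    then show ?thesis using loaded_edge_cost_le[OF wardrop cheap_path_avoiding eE] by auto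
  next
    case False
    then have "0 \<le> edge_load I P y e - edge_load I P f e" using load_bounds[of e] by auto
    then show ?thesis by (intro mult_right_mono) auto
  qed
  also have "\<dots> \<le> cost_potential (c e) (edge_load I P y e) - cost_potential (c e) (edge_load I P f e)"
    by (rule cost_function.cost_potential_supergradient[OF cost_function[OF eE] load_bounds(1,3)])
  finally show ?thesis .
qed

text \<open>Summing the edge estimates: by the truncated variational inequality the equilibrium
  potential is at most that of \<open>y\<close>, and on the flat edges potential and social cost are
  proportional up to the factors \<open>l\<close> and \<open>U\<close>; steep edges carry almost no load.\<close>
lemma equilibrium_cost_estimate:
  "(l - \<tau>) * social_cost E c (edge_load I P f)
     \<le> (U + \<tau>) * social_cost E c (edge_load I P y) + 2 * real (card E) * (\<tau> * M * B + \<tau> * M * Z + \<tau> * M * D)"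
proof -
  define x where "x e = edge_load I P f e" for e
  define v where "v e = edge_load I P y e" for e
  define ch where "ch e = min (c e (x e)) D" for e
  define err where "err = \<tau> * M * B + \<tau> * M * Z"
  define G where "G e z = cost_potential (c e) z" for e z
  define flat where "flat = E - steep"
  have split: "(\<Sum>e\<in>E. h e) = (\<Sum>e\<in>flat. h e) + (\<Sum>e\<in>steep. h e)" for h :: "'e \<Rightarrow> real"
    unfolding flat_def using sum.subset_diff[OF steep finite_edges] .
  have card: "real (card steep) \<le> real (card E)" "real (card flat) \<le> real (card E)"
    unfolding flat_def using card_mono[OF finite_edges steep] card_mono[OF finite_edges, of "E - steep"] by auto
  have D0: "0 \<le> D" by (rule cheap_bound_nonneg[OF wardrop cheap_path_avoiding I])
  have errors: "0 \<le> err" "0 \<le> \<tau> * M * D" using \<tau> inflow_nonneg B Z D0 by (auto simp: err_def)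
  have sum_le_card: "(\<Sum>e\<in>S. h e) \<le> real (card E) * b"
    if "\<And>e. e \<in> S \<Longrightarrow> h e \<le> b" "real (card S) \<le> real (card E)" "0 \<le> b" for S h b
    using sum_bounded_above[of S h b] that by (smt (verit) mult_right_mono)
  have xc_nonneg: "0 \<le> x e * c e (x e)" if "e \<in> E" for e
    using load_bounds(1) cost_nonneg[OF that load_bounds(1)] by (simp add: x_def)
  have steep_load: "(\<Sum>e\<in>steep. x e * c e (x e)) \<le> real (card E) * (\<tau> * M * D)"
    using steep_edge_cost_small card errors by (intro sum_le_card) (auto simp: x_def)
  have steep_vi: "(\<Sum>e\<in>steep. ch e * (v e - x e)) \<le> real (card E) * (\<tau> * M * D)"
    using steep_edge_truncated_term_small card errors by (intro sum_le_card) (auto simp: x_def v_def ch_def)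
  have "0 \<le> (\<Sum>e\<in>E. ch e * (v e - x e))"
    using truncated_variational_inequality[OF wardrop cheap_path_avoiding y I]
    unfolding ch_def x_def v_def .
  moreover have "(\<Sum>e\<in>flat. ch e * (v e - x e)) \<le> (\<Sum>e\<in>flat. G e (v e) - G e (x e))"
    using flat_edge_truncated_term_le by (intro sum_mono) (auto simp: flat_def ch_def x_def v_def G_def)
  ultimately have potentials: "(\<Sum>e\<in>flat. G e (x e)) \<le> (\<Sum>e\<in>flat. G e (v e)) + real (card E) * (\<tau> * M * D)"
    using steep_vi unfolding split[of "\<lambda>e. ch e * (v e - x e)"] by (simp add: sum_subtractf)
  have "(\<Sum>e\<in>flat. (l - \<tau>) * (x e * c e (x e))) \<le> (\<Sum>e\<in>flat. G e (x e) + err)"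
    using flat_edge_potential_bounds(1) by (intro sum_mono) (auto simp: flat_def x_def G_def err_def)
  also have "\<dots> \<le> (\<Sum>e\<in>flat. G e (x e)) + real (card E) * err"
    using card errors by (simp add: sum.distrib mult_right_mono)
  finally have flat_eq: "(\<Sum>e\<in>flat. (l - \<tau>) * (x e * c e (x e))) \<le> (\<Sum>e\<in>flat. G e (x e)) + real (card E) * err" .
  have "(\<Sum>e\<in>flat. G e (v e)) \<le> (\<Sum>e\<in>flat. (U + \<tau>) * (v e * c e (v e)) + err)"
    using flat_edge_potential_bounds(2) by (intro sum_mono) (auto simp: flat_def v_def G_def err_def)
  also have "\<dots> \<le> (U + \<tau>) * (\<Sum>e\<in>flat. v e * c e (v e)) + real (card E) * err"
    using card errors by (simp add: sum.distrib sum_distrib_left mult_right_mono)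
  finally have flat_y: "(\<Sum>e\<in>flat. G e (v e)) \<le> (U + \<tau>) * (\<Sum>e\<in>flat. v e * c e (v e)) + real (card E) * err" .
  have "(\<Sum>e\<in>flat. v e * c e (v e)) \<le> social_cost E c (edge_load I P y)"
    unfolding social_cost_def v_def[symmetric] split[of "\<lambda>e. v e * c e (v e)"]
    using steep load_bounds(3) cost_nonneg unfolding v_def
    by (smt (verit) subsetD sum_nonneg mult_nonneg_nonneg)
  then have social_y: "(U + \<tau>) * (\<Sum>e\<in>flat. v e * c e (v e)) \<le> (U + \<tau>) * social_cost E c (edge_load I P y)"
    using U_nonneg by (rule mult_left_mono)
  have steep_scaled: "(l - \<tau>) * (\<Sum>e\<in>steep. x e * c e (x e)) \<le> (\<Sum>e\<in>steep. x e * c e (x e))"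
    using l_bounds steep xc_nonneg by (intro mult_left_le_one_le sum_nonneg) auto
  have "(l - \<tau>) * social_cost E c (edge_load I P f)
      = (\<Sum>e\<in>flat. (l - \<tau>) * (x e * c e (x e))) + (l - \<tau>) * (\<Sum>e\<in>steep. x e * c e (x e))"
    unfolding social_cost_def x_def[symmetric] split[of "\<lambda>e. x e * c e (x e)"]
    by (simp add: sum_distrib_left distrib_left)
  also have "\<dots> \<le> (U + \<tau>) * social_cost E c (edge_load I P y) + 2 * real (card E) * (err + \<tau> * M * D)"
    using flat_eq potentials flat_y social_y steep_load steep_scaled by (simp add: algebra_simps)
  finally show ?thesis unfolding err_def by simp
qed

end

lemma equilibrium_cost_le:
  fixes K :: nat
  assumes wardrop: "wardrop_eq c I P m f" and y: "feasible_flow I P m y" and I: "I \<noteq> {}"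
    and M: "M = (\<Sum>i\<in>I. m i)" "0 < M" and Cm: "0 < Cm"
    and steep: "steep \<subseteq> E" and tight: "tight \<subseteq> E - steep"
    and avoiding: "\<And>i. i \<in> I \<Longrightarrow> \<exists>q\<in>P i. set q \<inter> steep = {}"
    and \<tau>: "0 < \<tau>" "\<tau> \<le> 1" and K: "0 < K" "1 / real K \<le> \<tau>"
    and L0: "L 0 = 0"
    and U: "U = (\<Sum>k\<in>{1..K}. L k) / real K" and l: "l = (\<Sum>k\<in>{1..K}. L (k - 1)) / real K"
    and Ul: "U = l + 1 / real K" "U \<le> 1" "lz \<le> l" and lz: "0 < lz" "\<tau> \<le> lz / 2"
    and a: "0 \<le> a" and d: "0 < d"
    and flat_bounded: "\<And>e. e \<in> E - steep \<Longrightarrow> c e M \<le> a * Cm"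
    and negligible: "\<And>e. e \<in> E - steep - tight \<Longrightarrow> c e M \<le> \<tau> * Cm"
    and steep_large: "\<And>e. e \<in> steep \<Longrightarrow>
      (real (card E) * real (card E) * a / \<tau> + real (card E) * a + 1) * Cm \<le> c e (\<tau> * M)"
    and scaling: "\<And>e z k. e \<in> tight \<Longrightarrow> \<tau> * M \<le> z \<Longrightarrow> z \<le> M \<Longrightarrow> k \<in> {1..K} \<Longrightarrow>
      \<bar>c e (z * real k / real K) - L k * c e z\<bar> \<le> \<tau> * c e z"
    and y_large: "d * M * Cm \<le> social_cost E c (edge_load I P y)"
  shows "social_cost E c (edge_load I P f)
    \<le> (1 + 2 * \<tau> * (3 + 2 * real (card E) * (a + 1 + real (card E) * a) / d) / lz)
        * social_cost E c (edge_load I P y)"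
proof -
  define n where "n = real (card E)"
  define D where "D = (\<Sum>e\<in>E - steep. c e M)"
  define Eq where "Eq = social_cost E c (edge_load I P f)"
  define Ly where "Ly = social_cost E c (edge_load I P y)"
  define \<kappa> where "\<kappa> = 2 * n * (a + 1 + n * a) / d"
  have n: "0 \<le> n" by (simp add: n_def)
  have \<kappa>: "0 \<le> \<kappa>" using n a d by (simp add: \<kappa>_def)
  have Ly: "0 \<le> Ly" unfolding Ly_def by (rule social_cost_nonneg[OF y])
  have cheap: "i \<in> I \<Longrightarrow> \<exists>q\<in>P i. path_cost c I P f q \<le> D" for i
    using avoiding path_cost_le_avoiding[OF wardrop_feasible[OF wardrop]] unfolding D_def M by blast
  have DA: "D \<le> n * (a * Cm)"
  proof -
    have "D \<le> (\<Sum>e\<in>E - steep. a * Cm)" unfolding D_def using flat_bounded by (rule sum_mono)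
    also have "\<dots> \<le> n * (a * Cm)"
      using card_mono[OF finite_edges, of "E - steep"] a Cm by (simp add: n_def mult_right_mono)
    finally show ?thesis .
  qed
  have l_le: "l - \<tau> \<le> 1"
    using Ul \<tau> K divide_pos_pos[of 1 "real K"] by linarith
  have steep_large': "D < c e (\<tau> * M) \<and> n * D * M < \<tau> * M * c e (\<tau> * M)" if "e \<in> steep" for e
    using steep_threshold_arith[OF DA n a Cm \<tau>(1) M(2)] steep_large[OF that] by (simp add: n_def)
  have "Eq \<le> (1 + 2 * \<tau> * (3 + \<kappa>) / lz) * Ly"
  proof (cases "Ly \<le> n * D * M")
    case False
    then have "Eq \<le> Ly" using equilibrium_social_cost_le[OF wardrop cheap I] M(1)
      by (simp add: Eq_def n_def)
    also have "\<dots> \<le> (1 + 2 * \<tau> * (3 + \<kappa>) / lz) * Ly"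
      using Ly \<tau> \<kappa> lz by (simp add: distrib_right)
    finally show ?thesis .
  next
    case True
    have "(l - \<tau>) * Eq \<le> (U + \<tau>) * Ly + 2 * n * (\<tau> * M * (a * Cm) + \<tau> * M * Cm + \<tau> * M * D)"
      unfolding Eq_def Ly_def n_def
      using \<tau> K Ul lz a Cm True steep_large' flat_bounded tight l_le
      by (intro equilibrium_cost_estimate[OF wardrop y I M(1) D_def steep tight avoiding \<tau> K(1) _ _
            _ negligible _ scaling L0 U l]) (auto simp: n_def Ly_def D_def)
    also have "\<dots> \<le> (l + 2 * \<tau>) * Ly + \<tau> * \<kappa> * Ly"
    proof -
      have "\<tau> * M * (a * Cm) + \<tau> * M * Cm + \<tau> * M * D \<le> \<tau> * (a + 1 + n * a) * (M * Cm)"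
        using DA \<tau> M by (simp add: algebra_simps mult_left_mono)
      also have "\<dots> \<le> \<tau> * (a + 1 + n * a) * (Ly / d)"
        using y_large d \<tau> a n unfolding Ly_def by (intro mult_left_mono) (auto simp: field_simps)
      finally have "2 * n * (\<tau> * M * (a * Cm) + \<tau> * M * Cm + \<tau> * M * D)
          \<le> 2 * n * (\<tau> * (a + 1 + n * a) * (Ly / d))"
        using n by (intro mult_left_mono) auto
      also have "\<dots> = \<tau> * \<kappa> * Ly" by (simp add: \<kappa>_def)
      finally have "2 * n * (\<tau> * M * (a * Cm) + \<tau> * M * Cm + \<tau> * M * D) \<le> \<tau> * \<kappa> * Ly" .
      moreover have "(U + \<tau>) * Ly \<le> (l + 2 * \<tau>) * Ly" using Ul K Ly by (intro mult_right_mono) auto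
      ultimately show ?thesis by linarith
    qed
    finally show ?thesis using scaled_le_one_plus Ul lz Ly \<tau> \<kappa> by simp
  qed
  then show ?thesis by (simp add: Eq_def Ly_def \<kappa>_def n_def)
qed

lemma PoA_bounds:
  assumes demands: "\<And>i. i \<in> I \<Longrightarrow> m i \<ge> 0" and \<beta>: "0 < \<beta>" and \<theta>: "0 \<le> \<theta>"
    and opt_large: "\<And>y. feasible_flow I P m y \<Longrightarrow> \<beta> \<le> social_cost E c (edge_load I P y)"
    and eq_le: "\<And>f y. wardrop_eq c I P m f \<Longrightarrow> feasible_flow I P m y \<Longrightarrow>
      social_cost E c (edge_load I P f) \<le> (1 + \<theta>) * social_cost E c (edge_load I P y)"
  shows "1 \<le> PoA E c I P m \<and> PoA E c I P m \<le> 1 + \<theta>"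
proof -
  define f where "f = (SOME f. wardrop_eq c I P m f)"
  have wardrop: "wardrop_eq c I P m f"
    unfolding f_def using exists_wardrop_eq[OF demands] by (rule someI_ex)
  define Eq where "Eq = social_cost E c (edge_load I P f)"
  define S where "S = {social_cost E c (edge_load I P y) |y. feasible_flow I P m y}"
  have S: "S \<noteq> {}" "bdd_below S"
    using wardrop_feasible[OF wardrop] social_cost_nonneg unfolding S_def by (auto intro!: bdd_belowI)
  have lower: "Inf S \<le> Eq"
    unfolding Eq_def S_def using wardrop_feasible[OF wardrop] S(2)
    by (intro cInf_lower) (auto simp: S_def)
  have opt_pos: "\<beta> \<le> Inf S" using S(1) opt_large by (intro cInf_greatest) (auto simp: S_def)
  have upper: "Eq / (1 + \<theta>) \<le> Inf S"
    using S(1) eq_le[OF wardrop] \<theta> by (intro cInf_greatest) (auto simp: S_def Eq_def field_simps)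
  have "PoA E c I P m = Eq / Inf S"
    using \<beta> opt_pos unfolding PoA_def opt_cost_def eq_cost_def Eq_def f_def S_def by simp
  moreover have "1 \<le> Eq / Inf S" using lower opt_pos \<beta> by simp
  moreover have "Eq / Inf S \<le> 1 + \<theta>" using upper opt_pos \<beta> \<theta> by (simp add: field_simps)
  ultimately show ?thesis by simp
qed

end

section \<open>Regularly varying benchmarks\<close>

locale regular_variation =
  fixes F :: "real filter" and cb :: "real \<Rightarrow> real"
  assumes omega: "F = at_top \<or> F = at_right 0" and regularly_varying: "regularly_varying F cb"
begin

lemma filter_nontrivial: "F \<noteq> bot"
  using omega trivial_limit_at_right_real[of "0::real"] trivial_limit_at_top_linorder
  by (auto simp: trivial_limit_def)

lemma eventually_pos: "eventually (\<lambda>t. 0 < t) F"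
  using omega by (auto simp: eventually_at_top_linorder eventually_at_right_field intro!: exI[of _ 1])

lemma benchmark_pos: "0 < t \<Longrightarrow> 0 < cb t"
  using regularly_varying unfolding regularly_varying_def by blast

lemma eventually_benchmark_pos: "eventually (\<lambda>t. 0 < cb t) F"
  using eventually_pos by (auto elim: eventually_mono intro: benchmark_pos)

lemma filterlim_scale:
  assumes "0 < \<kappa>"
  shows "filterlim (\<lambda>t. t * \<kappa>) F F"
  using omega
proof
  assume F: "F = at_top"
  show ?thesis unfolding F by (rule filterlim_at_top_mult_tendsto_pos[OF tendsto_const assms filterlim_ident])
next
  assume F: "F = at_right 0"
  have "((\<lambda>t. t * \<kappa>) \<longlongrightarrow> 0 * \<kappa>) (at_right (0::real))" by (intro tendsto_intros)
  moreover have "eventually (\<lambda>t. t * \<kappa> \<in> {0<..} \<and> t * \<kappa> \<noteq> 0) (at_right (0::real))"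
    using assms by (auto simp: eventually_at_right_field intro: exI[of _ 1])
  ultimately show ?thesis unfolding F filterlim_at by simp
qed

lemma eventually_scaled: "0 < \<kappa> \<Longrightarrow> eventually Q F \<Longrightarrow> eventually (\<lambda>t. Q (t * \<kappa>)) F"
  using eventually_compose_filterlim filterlim_scale by blast

lemma eventually_on_window:
  assumes ev: "eventually Q F" and M: "filterlim M F sequentially" and \<epsilon>: "0 < \<epsilon>"
  shows "eventually (\<lambda>n. \<forall>z. \<epsilon> * M n \<le> z \<longrightarrow> z \<le> M n \<longrightarrow> Q z) sequentially"
  using omega
proof
  assume F: "F = at_top"
  obtain T where T: "\<And>z. z \<ge> T \<Longrightarrow> Q z" using ev unfolding F eventually_at_top_linorder by blast
  have "eventually (\<lambda>n. M n \<ge> T / \<epsilon>) sequentially" using M unfolding F filterlim_at_top by blast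
  then show ?thesis
  proof (rule eventually_mono)
    fix n assume "T / \<epsilon> \<le> M n"
    then have "T \<le> \<epsilon> * M n" using \<epsilon> by (simp add: field_simps)
    then show "\<forall>z. \<epsilon> * M n \<le> z \<longrightarrow> z \<le> M n \<longrightarrow> Q z" using T by auto
  qed
next
  assume F: "F = at_right 0"
  obtain b where b: "b > 0" "\<And>z. z > 0 \<Longrightarrow> z < b \<Longrightarrow> Q z"
    using ev unfolding F eventually_at_right_field by blast
  have "eventually (\<lambda>t. t \<in> {0<..<b}) (at_right (0::real))"
    using b(1) by (auto simp: eventually_at_right_field intro: exI[of _ b])
  then have "eventually (\<lambda>n. M n \<in> {0<..<b}) sequentially"
    using M unfolding F by (rule eventually_compose_filterlim)
  then show ?thesis
  proof (rule eventually_mono)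
    fix n assume n: "M n \<in> {0<..<b}"
    then have "0 < \<epsilon> * M n" using \<epsilon> by simp
    then show "\<forall>z. \<epsilon> * M n \<le> z \<longrightarrow> z \<le> M n \<longrightarrow> Q z" using b n by auto
  qed
qed

definition scale_limit :: "real \<Rightarrow> real" where
  "scale_limit r = Lim F (\<lambda>t. cb (t * r) / cb t)"

lemma tendsto_scale_limit:
  assumes "0 < r"
  shows "((\<lambda>t. cb (t * r) / cb t) \<longlongrightarrow> scale_limit r) F"
    and "0 < scale_limit r"
proof -
  obtain L where L: "L \<noteq> 0" "((\<lambda>t. cb (t * r) / cb t) \<longlongrightarrow> L) F"
    using regularly_varying assms unfolding regularly_varying_def by blast
  have "scale_limit r = L"
    unfolding scale_limit_def using L(2) filter_nontrivial by (simp add: tendsto_Lim)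
  then show lim: "((\<lambda>t. cb (t * r) / cb t) \<longlongrightarrow> scale_limit r) F" using L by simp
  have "eventually (\<lambda>t. 0 \<le> cb (t * r) / cb t) F"
    using eventually_pos assms by (auto elim!: eventually_mono intro!: divide_pos_pos less_imp_le benchmark_pos)
  then have "0 \<le> scale_limit r" using tendsto_lowerbound[OF lim _ filter_nontrivial] by blast
  then show "0 < scale_limit r" using L \<open>scale_limit r = L\<close> by simp
qed

lemma scale_limit_1: "scale_limit 1 = 1"
proof -
  have "eventually (\<lambda>t. cb (t * 1) / cb t = 1) F"
    using eventually_benchmark_pos by (auto elim: eventually_mono)
  then have "((\<lambda>t. cb (t * 1) / cb t) \<longlongrightarrow> 1) F" by (rule tendsto_eventually)
  then show ?thesis unfolding scale_limit_def using filter_nontrivial by (simp add: tendsto_Lim)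
qed

lemma eventually_benchmark_scaled_ge:
  assumes "0 < \<kappa>"
  shows "eventually (\<lambda>t. scale_limit \<kappa> / 2 * cb t \<le> cb (t * \<kappa>)) F"
proof -
  have "eventually (\<lambda>t. scale_limit \<kappa> / 2 < cb (t * \<kappa>) / cb t) F"
    using order_tendstoD(1)[OF tendsto_scale_limit(1)[OF assms], of "scale_limit \<kappa> / 2"]
      tendsto_scale_limit(2)[OF assms] by linarith
  then show ?thesis using eventually_benchmark_pos by eventually_elim (simp add: field_simps)
qed

lemma eventually_le_of_ratio:
  assumes "((\<lambda>x. g x / cb x) \<longlongrightarrow> a) F" "a < b"
  shows "eventually (\<lambda>t. g t \<le> b * cb t) F"
  using order_tendstoD(2)[OF assms] eventually_benchmark_pos by eventually_elim (simp add: field_simps)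

lemma eventually_ge_of_ratio:
  assumes "((\<lambda>x. g x / cb x) \<longlongrightarrow> a) F" "b < a"
  shows "eventually (\<lambda>t. b * cb t \<le> g t) F"
  using order_tendstoD(1)[OF assms] eventually_benchmark_pos by eventually_elim (simp add: field_simps)

lemma eventually_ge_of_ratio_infinite:
  assumes "((\<lambda>x. ereal (g x / cb x)) \<longlongrightarrow> \<infinity>) F"
  shows "eventually (\<lambda>t. b * cb t \<le> g t) F"
proof -
  have "eventually (\<lambda>t. ereal b < ereal (g t / cb t)) F" using assms unfolding tendsto_PInfty by blast
  then show ?thesis using eventually_benchmark_pos by eventually_elim (simp add: field_simps)
qed

lemma eventually_scaled_ge_of_ratio_infinite:
  assumes "((\<lambda>x. ereal (g x / cb x)) \<longlongrightarrow> \<infinity>) F" "0 < \<kappa>"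
  shows "eventually (\<lambda>t. b * cb t \<le> g (t * \<kappa>)) F"
proof -
  define b' where "b' = 2 * \<bar>b\<bar> / scale_limit \<kappa>"
  have pos: "0 < scale_limit \<kappa>" using tendsto_scale_limit(2)[OF assms(2)] .
  have "eventually (\<lambda>t. b' * cb (t * \<kappa>) \<le> g (t * \<kappa>)) F"
    using eventually_scaled[OF assms(2) eventually_ge_of_ratio_infinite[OF assms(1)]] .
  then show ?thesis using eventually_benchmark_scaled_ge[OF assms(2)] eventually_benchmark_pos
  proof eventually_elim
    case (elim t)
    have "b * cb t \<le> \<bar>b\<bar> * cb t" using elim(3) by (simp add: mult_right_mono)
    also have "\<dots> = b' * (scale_limit \<kappa> / 2 * cb t)" using pos by (simp add: b'_def field_simps)
    also have "\<dots> \<le> b' * cb (t * \<kappa>)" using elim(2) pos by (intro mult_left_mono) (auto simp: b'_def)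
    also have "\<dots> \<le> g (t * \<kappa>)" using elim(1) .
    finally show ?case .
  qed
qed

lemma eventually_scaled_ge_of_ratio:
  assumes "((\<lambda>x. g x / cb x) \<longlongrightarrow> a) F" "0 < a" "0 < \<kappa>"
  shows "eventually (\<lambda>t. (a / 2 * (scale_limit \<kappa> / 2)) * cb t \<le> g (t * \<kappa>)) F"
proof -
  have "eventually (\<lambda>t. a / 2 * cb (t * \<kappa>) \<le> g (t * \<kappa>)) F"
    using eventually_scaled[OF assms(3) eventually_ge_of_ratio[OF assms(1), of "a / 2"]] assms(2) by simp
  then show ?thesis using eventually_benchmark_scaled_ge[OF assms(3)]
  proof eventually_elim
    case (elim t)
    have "(a / 2 * (scale_limit \<kappa> / 2)) * cb t = a / 2 * (scale_limit \<kappa> / 2 * cb t)" by simp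
    also have "\<dots> \<le> a / 2 * cb (t * \<kappa>)" using elim(2) assms(2) by (intro mult_left_mono) auto
    finally have "(a / 2 * (scale_limit \<kappa> / 2)) * cb t \<le> a / 2 * cb (t * \<kappa>)" .
    then show ?case using elim(1) by linarith
  qed
qed

lemma tendsto_ratio_scaled:
  assumes "((\<lambda>x. g x / cb x) \<longlongrightarrow> a) F" "0 < a" "0 < r"
  shows "((\<lambda>t. g (t * r) / g t) \<longlongrightarrow> scale_limit r) F"
proof -
  have scaled: "((\<lambda>t. g (t * r) / cb (t * r)) \<longlongrightarrow> a) F"
    using filterlim_compose[OF assms(1) filterlim_scale[OF assms(3)]] by simp
  have "((\<lambda>t. (g (t * r) / cb (t * r)) * (cb (t * r) / cb t) / (g t / cb t)) \<longlongrightarrow> a * scale_limit r / a) F"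
    by (intro tendsto_intros scaled tendsto_scale_limit(1)[OF assms(3)] assms(1)) (use assms in simp)
  moreover have "eventually (\<lambda>t. (g (t * r) / cb (t * r)) * (cb (t * r) / cb t) / (g t / cb t)
      = g (t * r) / g t) F"
    using eventually_benchmark_pos eventually_scaled[OF assms(3) eventually_benchmark_pos]
    by eventually_elim (simp add: field_simps)
  ultimately have "((\<lambda>t. g (t * r) / g t) \<longlongrightarrow> a * scale_limit r / a) F"
    by (rule Lim_transform_eventually)
  then show ?thesis using assms(2) by simp
qed

lemma scale_limit_mono:
  assumes lim: "((\<lambda>x. g x / cb x) \<longlongrightarrow> a) F" and a: "0 < a" and g: "mono_on {0..} g"
    and rs: "0 < r" "r \<le> s"
  shows "scale_limit r \<le> scale_limit s"
proof (rule tendsto_le[OF filter_nontrivial tendsto_ratio_scaled[OF lim a] tendsto_ratio_scaled[OF lim a]])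
  show "0 < s" "0 < r" using rs by auto
  have "a / 2 < a" using a by simp
  show "\<forall>\<^sub>F t in F. g (t * r) / g t \<le> g (t * s) / g t"
    using eventually_ge_of_ratio[OF lim \<open>a / 2 < a\<close>] eventually_benchmark_pos eventually_pos
  proof eventually_elim
    case (elim t)
    have "0 < a / 2 * cb t" using elim(2) a by simp
    then have "0 < g t" using elim(1) by linarith
    moreover have "g (t * r) \<le> g (t * s)"
      using rs elim(3) by (intro mono_onD[OF g]) (auto intro: mult_left_mono)
    ultimately show ?case by (simp add: divide_right_mono)
  qed
qed

end

lemma telescope_shifted_sum:
  fixes L :: "nat \<Rightarrow> real"
  shows "(\<Sum>k\<in>{1..K}. L k) - (\<Sum>k\<in>{1..K}. L (k - 1)) = L K - L 0"
  by (induction K) simp_all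

lemma riemann_sums_of_mono:
  fixes h :: "real \<Rightarrow> real" and J :: nat
  assumes mono: "\<And>a b. 0 < a \<Longrightarrow> a \<le> b \<Longrightarrow> h a \<le> h b" and h1: "h 1 = 1"
    and pos: "\<And>a. 0 < a \<Longrightarrow> 0 < h a"
    and J: "0 < J" and K: "K = 2 * J" and L: "L = (\<lambda>k::nat. if k = 0 then 0 else h (real k / real K))"
  shows "(\<Sum>k\<in>{1..K}. L k) / real K = (\<Sum>k\<in>{1..K}. L (k - 1)) / real K + 1 / real K"
    and "(\<Sum>k\<in>{1..K}. L k) / real K \<le> 1"
    and "h (1/2) / 2 \<le> (\<Sum>k\<in>{1..K}. L (k - 1)) / real K"
proof -
  have K0: "0 < K" using J by (simp add: K)
  have "L K = 1" using K0 h1 by (simp add: L)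
  then show "(\<Sum>k\<in>{1..K}. L k) / real K = (\<Sum>k\<in>{1..K}. L (k - 1)) / real K + 1 / real K"
    using telescope_shifted_sum[of L K] K0 by (simp add: L field_simps)
  have "(\<Sum>k\<in>{1..K}. L k) \<le> (\<Sum>k\<in>{1..K}. 1)"
  proof (rule sum_mono)
    fix k assume k: "k \<in> {1..K}"
    have "h (real k / real K) \<le> h 1" using k K0 by (intro mono) auto
    then show "L k \<le> 1" using k h1 by (simp add: L)
  qed
  then show "(\<Sum>k\<in>{1..K}. L k) / real K \<le> 1" using K0 by simp
  have L_nonneg: "0 \<le> L k" for k using pos[of "real k / real K"] K0 by (auto simp: L)
  have "real J * h (1/2) = (\<Sum>k\<in>{J+1..K}. h (1/2))" by (simp add: K)
  also have "\<dots> \<le> (\<Sum>k\<in>{J+1..K}. L (k - 1))"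
  proof (rule sum_mono)
    fix k assume k: "k \<in> {J+1..K}"
    then have k1: "k - 1 \<noteq> 0" "real J \<le> real (k - 1)" using J by auto
    have "h (1/2) = h (real J / real K)" using J by (simp add: K)
    also have "\<dots> \<le> h (real (k - 1) / real K)"
      using J K0 k1 by (intro mono divide_right_mono) (auto simp: K)
    finally show "h (1/2) \<le> L (k - 1)" using k1 by (simp add: L)
  qed
  also have "\<dots> \<le> (\<Sum>k\<in>{1..K}. L (k - 1))" using L_nonneg by (intro sum_mono2) auto
  finally show "h (1/2) / 2 \<le> (\<Sum>k\<in>{1..K}. L (k - 1)) / real K"
    using K0 J by (simp add: K field_simps)
qed

lemma exists_ge_average:
  fixes f :: "'a \<Rightarrow> real"
  assumes "finite A" "A \<noteq> {}"
  shows "\<exists>a\<in>A. sum f A / card A \<le> f a"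
proof (rule ccontr)
  assume "\<not> ?thesis"
  then have "sum f A < (\<Sum>a\<in>A. sum f A / card A)" using assms by (intro sum_strict_mono) auto
  then show False using assms by simp
qed

section \<open>Asymptotics of the price of anarchy\<close>

locale benchmarked_network = network E I P c + regular_variation F cb
  for E :: "'e set" and I :: "'i set" and P :: "'i \<Rightarrow> 'e list set" and c :: "'e \<Rightarrow> real \<Rightarrow> real"
    and F :: "real filter" and cb :: "real \<Rightarrow> real" +
  assumes benchmark: "benchmark F cb E c"
    and alpha_od_finite: "\<And>i. i \<in> I \<Longrightarrow> alpha_od F cb c P i < \<infinity>"
begin

abbreviation "\<alpha> \<equiv> alpha_edge F cb c"

definition steep_edges :: "'e set" where
  "steep_edges = {e\<in>E. \<alpha> e = \<infinity>}"

definition tight_edges :: "'e set" where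
  "tight_edges = {e\<in>E. 0 < \<alpha> e \<and> \<alpha> e < \<infinity>}"

definition edge_ratio :: "'e \<Rightarrow> real" where
  "edge_ratio e = real_of_ereal (\<alpha> e)"

definition positive_od_pairs :: "'i set" where
  "positive_od_pairs = {i\<in>I. 0 < alpha_od F cb c P i}"

lemma tendsto_alpha_edge: "e \<in> E \<Longrightarrow> ((\<lambda>x. ereal (c e x / cb x)) \<longlongrightarrow> \<alpha> e) F"
  using benchmark filter_nontrivial unfolding benchmark_def alpha_edge_def by (metis tendsto_Lim)

lemma alpha_edge_nonneg:
  assumes e: "e \<in> E"
  shows "0 \<le> \<alpha> e"
proof (rule tendsto_lowerbound[OF tendsto_alpha_edge[OF e] _ filter_nontrivial])
  show "\<forall>\<^sub>F x in F. 0 \<le> ereal (c e x / cb x)"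
    using eventually_pos eventually_benchmark_pos by eventually_elim (use cost_nonneg[OF e] in auto)
qed

lemma flat_edge_ratio:
  assumes "e \<in> E - steep_edges"
  shows "\<alpha> e = ereal (edge_ratio e)" "0 \<le> edge_ratio e"
    and "((\<lambda>x. c e x / cb x) \<longlongrightarrow> edge_ratio e) F"
proof -
  have "\<bar>\<alpha> e\<bar> \<noteq> \<infinity>" using alpha_edge_nonneg[of e] assms unfolding steep_edges_def by auto
  then show ae: "\<alpha> e = ereal (edge_ratio e)" unfolding edge_ratio_def by (simp add: ereal_real')
  then show "0 \<le> edge_ratio e" using alpha_edge_nonneg[of e] assms by simp
  show "((\<lambda>x. c e x / cb x) \<longlongrightarrow> edge_ratio e) F" using tendsto_alpha_edge[of e] assms ae by simp
qed

lemma tight_edges_subset: "tight_edges \<subseteq> E - steep_edges"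
  by (auto simp: tight_edges_def steep_edges_def)

lemma tight_edge_ratio_pos: "e \<in> tight_edges \<Longrightarrow> 0 < edge_ratio e"
  using flat_edge_ratio(1)[of e] tight_edges_subset by (auto simp: tight_edges_def)

lemma negligible_edge_ratio: "e \<in> E - steep_edges - tight_edges \<Longrightarrow> edge_ratio e = 0"
  using flat_edge_ratio(1,2)[of e] by (auto simp: tight_edges_def steep_edges_def)

lemma steep_edge_tendsto: "e \<in> steep_edges \<Longrightarrow> ((\<lambda>x. ereal (c e x / cb x)) \<longlongrightarrow> \<infinity>) F"
  using tendsto_alpha_edge[of e] by (auto simp: steep_edges_def)

lemma alpha_od_attained:
  assumes "i \<in> I"
  obtains q where "q \<in> P i" "Max (insert 0 (\<alpha> ` set q)) = alpha_od F cb c P i"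
proof -
  have "alpha_od F cb c P i \<in> (\<lambda>p. Max (insert 0 (\<alpha> ` set p))) ` P i"
    unfolding alpha_od_def using finite_paths[OF assms] paths_nonempty[OF assms] by (intro Min_in) auto
  then show ?thesis using that by auto
qed

lemma path_avoiding_steep_edges:
  assumes i: "i \<in> I"
  shows "\<exists>q\<in>P i. set q \<inter> steep_edges = {}"
proof -
  obtain q where q: "q \<in> P i" "Max (insert 0 (\<alpha> ` set q)) = alpha_od F cb c P i"
    using alpha_od_attained[OF i] .
  have "\<alpha> e < \<infinity>" if "e \<in> set q" for e
    using Max_ge[of "insert 0 (\<alpha> ` set q)" "\<alpha> e"] that q(2) alpha_od_finite[OF i] by auto
  then show ?thesis using q(1) unfolding steep_edges_def by auto
qed

lemma positive_od_pair_path_edge: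
  assumes i: "i \<in> positive_od_pairs" and p: "p \<in> P i"
  shows "\<exists>e\<in>set p. 0 < \<alpha> e"
proof -
  have iI: "i \<in> I" using i by (simp add: positive_od_pairs_def)
  have "alpha_od F cb c P i \<le> Max (insert 0 (\<alpha> ` set p))"
    unfolding alpha_od_def using finite_paths[OF iI] p by (intro Min_le) auto
  moreover have "0 < alpha_od F cb c P i" using i by (simp add: positive_od_pairs_def)
  ultimately have "0 < Max (insert 0 (\<alpha> ` set p))" by (rule order.strict_trans2[rotated])
  then show ?thesis using Max_in[of "insert 0 (\<alpha> ` set p)"] by auto
qed

lemma positive_od_pair_tight_edge:
  assumes i: "i \<in> positive_od_pairs"
  shows "tight_edges \<noteq> {}"
proof -
  have iI: "i \<in> I" using i by (simp add: positive_od_pairs_def)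
  obtain q where q: "q \<in> P i" "Max (insert 0 (\<alpha> ` set q)) = alpha_od F cb c P i"
    using alpha_od_attained[OF iI] .
  have pos: "0 < Max (insert 0 (\<alpha> ` set q))" "Max (insert 0 (\<alpha> ` set q)) < \<infinity>"
    using q(2) i alpha_od_finite[OF iI] by (auto simp: positive_od_pairs_def)
  then obtain e where "e \<in> set q" "\<alpha> e = Max (insert 0 (\<alpha> ` set q))"
    using Max_in[of "insert 0 (\<alpha> ` set q)"] by auto
  moreover have "e \<in> E" using paths_in_edges[OF iI q(1)] \<open>e \<in> set q\<close> by auto
  ultimately have "e \<in> tight_edges" using pos unfolding tight_edges_def by auto
  then show ?thesis by blast
qed

lemma scale_limit_mono_of_tight:
  assumes "tight_edges \<noteq> {}" "0 < r" "r \<le> s"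
  shows "scale_limit r \<le> scale_limit s"
proof -
  obtain e where e: "e \<in> tight_edges" using assms(1) by blast
  then have "e \<in> E - steep_edges" using tight_edges_subset by auto
  then show ?thesis
    using scale_limit_mono[OF flat_edge_ratio(3) tight_edge_ratio_pos[OF e]] cost_function assms(2,3)
    by (auto simp: cost_function.mono)
qed

lemma eventually_positive_edges_ge:
  assumes \<kappa>: "0 < \<kappa>"
  obtains \<beta> where "0 < \<beta>" "eventually (\<lambda>t. \<forall>e\<in>E. 0 < \<alpha> e \<longrightarrow> \<beta> * cb t \<le> c e (t * \<kappa>)) F"
proof
  define \<beta> where "\<beta> = Min (insert 1 ((\<lambda>e. edge_ratio e / 2 * (scale_limit \<kappa> / 2)) ` tight_edges))"
  have finite: "finite tight_edges" using finite_edges by (simp add: tight_edges_def)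
  show "0 < \<beta>"
    unfolding \<beta>_def using finite tight_edge_ratio_pos tendsto_scale_limit(2)[OF \<kappa>]
    by (subst Min_gr_iff) auto
  have "eventually (\<lambda>t. \<beta> * cb t \<le> c e (t * \<kappa>)) F" if e: "e \<in> E" "0 < \<alpha> e" for e
  proof (cases "e \<in> steep_edges")
    case True
    then show ?thesis using eventually_scaled_ge_of_ratio_infinite[OF steep_edge_tendsto \<kappa>] by blast
  next
    case False
    then have tight: "e \<in> tight_edges" and flat: "e \<in> E - steep_edges"
      using e by (auto simp: tight_edges_def steep_edges_def)
    have \<beta>_le: "\<beta> \<le> edge_ratio e / 2 * (scale_limit \<kappa> / 2)"
      unfolding \<beta>_def using finite tight by (intro Min_le) auto
    show ?thesis
      using eventually_scaled_ge_of_ratio[OF flat_edge_ratio(3)[OF flat] tight_edge_ratio_pos[OF tight] \<kappa>]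
        eventually_benchmark_pos
    proof eventually_elim
      case (elim t)
      have "\<beta> * cb t \<le> edge_ratio e / 2 * (scale_limit \<kappa> / 2) * cb t"
        using \<beta>_le elim(2) by (intro mult_right_mono) auto
      then show ?case using elim(1) by linarith
    qed
  qed
  then show "eventually (\<lambda>t. \<forall>e\<in>E. 0 < \<alpha> e \<longrightarrow> \<beta> * cb t \<le> c e (t * \<kappa>)) F"
    using finite_edges by (auto intro: eventually_ball_finite)
qed

text \<open>Some path of the pair carries at least the average flow \<open>m i / card (P i)\<close>, and that path
  contains an edge of positive \<open>\<alpha>\<close>.\<close>
lemma social_cost_ge_heavy_od_pair:
  assumes y: "feasible_flow I P m y" and i: "i \<in> positive_od_pairs"
    and heavy: "\<kappa> * M * real (card (P i)) \<le> m i" and \<kappa>M: "0 \<le> \<kappa> * M" and \<beta>C: "0 \<le> \<beta> * C"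
    and large: "\<And>e. e \<in> E \<Longrightarrow> 0 < \<alpha> e \<Longrightarrow> \<beta> * C \<le> c e (M * \<kappa>)"
  shows "\<kappa> * M * (\<beta> * C) \<le> social_cost E c (edge_load I P y)"
proof -
  have iI: "i \<in> I" using i by (simp add: positive_od_pairs_def)
  have card: "0 < card (P i)" using finite_paths[OF iI] paths_nonempty[OF iI] by (simp add: card_gt_0_iff)
  obtain p where p: "p \<in> P i" "(\<Sum>q\<in>P i. y q) / card (P i) \<le> y p"
    using exists_ge_average[OF finite_paths[OF iI] paths_nonempty[OF iI]] by blast
  have "\<kappa> * M \<le> m i / card (P i)" using heavy card by (simp add: field_simps)
  then have yp: "\<kappa> * M \<le> y p" using p(2) y iI by (simp add: feasible_flow_def)
  obtain e where e: "e \<in> set p" "0 < \<alpha> e" using positive_od_pair_path_edge[OF i p(1)] by blast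
  have pA: "p \<in> A" using p iI by (auto simp: mem_all_paths_iff)
  have eE: "e \<in> E" using paths_in_edges[OF iI p(1)] e by auto
  define x where "x = edge_load I P y e"
  have x: "\<kappa> * M \<le> x" using yp flow_le_edge_load[OF y pA e(1)] unfolding x_def by simp
  have "\<beta> * C \<le> c e x"
    using large[OF eE e(2)] cost_mono[OF eE \<kappa>M x] by (simp add: mult.commute)
  then have "\<kappa> * M * (\<beta> * C) \<le> x * c e x" using x \<kappa>M \<beta>C by (intro mult_mono) auto
  also have "\<dots> \<le> social_cost E c (edge_load I P y)" unfolding x_def by (rule edge_social_cost_le[OF y eE])
  finally show ?thesis .
qed

lemma exists_heavy_positive_od_pair:
  assumes \<delta>: "0 < \<delta>" "\<delta> < (\<Sum>i\<in>positive_od_pairs. m i / M)"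
  shows "\<exists>i\<in>positive_od_pairs. \<delta> / real (card I) \<le> m i / M"
proof -
  have sub: "positive_od_pairs \<subseteq> I" by (auto simp: positive_od_pairs_def)
  have finite: "finite positive_od_pairs" using sub finite_od_pairs by (rule finite_subset)
  have ne: "positive_od_pairs \<noteq> {}" using \<delta> by auto
  obtain i where i: "i \<in> positive_od_pairs"
    "(\<Sum>i\<in>positive_od_pairs. m i / M) / card positive_od_pairs \<le> m i / M"
    using exists_ge_average[OF finite ne] by blast
  have "0 < card positive_od_pairs" using finite ne by (simp add: card_gt_0_iff)
  moreover have "card positive_od_pairs \<le> card I" using card_mono[OF finite_od_pairs sub] .
  ultimately have "\<delta> / real (card I) \<le> \<delta> / card positive_od_pairs"
    using \<delta> by (intro divide_left_mono) auto
  also have "\<dots> \<le> (\<Sum>i\<in>positive_od_pairs. m i / M) / card positive_od_pairs"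
    using \<delta> by (intro divide_right_mono) auto
  also have "\<dots> \<le> m i / M" by (rule i(2))
  finally show ?thesis using i(1) by blast
qed

lemma eventually_flat_edges_bounded:
  obtains a where "0 \<le> a" "eventually (\<lambda>t. \<forall>e\<in>E - steep_edges. c e t \<le> a * cb t) F"
proof
  define a where "a = (\<Sum>e\<in>E - steep_edges. edge_ratio e + 1)"
  have a_ge: "edge_ratio e + 1 \<le> a" if e: "e \<in> E - steep_edges" for e
    unfolding a_def using e finite_edges flat_edge_ratio(2) by (intro member_le_sum) (auto simp: add_nonneg_nonneg)
  show "0 \<le> a" unfolding a_def using flat_edge_ratio(2) by (intro sum_nonneg) (auto simp: add_nonneg_nonneg)
  have "eventually (\<lambda>t. c e t \<le> a * cb t) F" if e: "e \<in> E - steep_edges" for e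
    using eventually_le_of_ratio[OF flat_edge_ratio(3)[OF e] less_add_one] eventually_benchmark_pos
  proof eventually_elim
    case (elim t)
    have "(edge_ratio e + 1) * cb t \<le> a * cb t" using a_ge[OF e] elim(2) by (intro mult_right_mono) auto
    then show ?case using elim(1) by linarith
  qed
  then show "eventually (\<lambda>t. \<forall>e\<in>E - steep_edges. c e t \<le> a * cb t) F"
    using finite_edges by (auto intro: eventually_ball_finite)
qed

lemma eventually_negligible_edges_small:
  assumes "0 < \<tau>"
  shows "eventually (\<lambda>t. \<forall>e\<in>E - steep_edges - tight_edges. c e t \<le> \<tau> * cb t) F"
proof -
  have "eventually (\<lambda>t. c e t \<le> \<tau> * cb t) F" if e: "e \<in> E - steep_edges - tight_edges" for e
    using eventually_le_of_ratio[OF flat_edge_ratio(3)] negligible_edge_ratio[OF e] e assms by auto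
  then show ?thesis using finite_edges by (auto intro: eventually_ball_finite)
qed

lemma eventually_steep_edges_large:
  assumes "0 < \<tau>"
  shows "eventually (\<lambda>t. \<forall>e\<in>steep_edges. b * cb t \<le> c e (t * \<tau>)) F"
proof -
  have "finite steep_edges" using finite_edges by (simp add: steep_edges_def)
  then show ?thesis
    using eventually_scaled_ge_of_ratio_infinite[OF steep_edge_tendsto assms] by (intro eventually_ball_finite) auto
qed

lemma eventually_tight_edges_scaling:
  assumes \<tau>: "0 < \<tau>" and K: "0 < K"
  shows "eventually (\<lambda>t. \<forall>e\<in>tight_edges. \<forall>k\<in>{1..K}.
    \<bar>c e (t * real k / real K) - scale_limit (real k / real K) * c e t\<bar> \<le> \<tau> * c e t) F"
proof -
  have "eventually (\<lambda>t. \<bar>c e (t * real k / real K) - scale_limit (real k / real K) * c e t\<bar> \<le> \<tau> * c e t) F"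
    if e: "e \<in> tight_edges" and k: "k \<in> {1..K}" for e k
  proof -
    have flat: "e \<in> E - steep_edges" using e tight_edges_subset by auto
    have r: "0 < real k / real K" using k K by auto
    have pos: "0 < edge_ratio e / 2" "edge_ratio e / 2 < edge_ratio e" using tight_edge_ratio_pos[OF e] by auto
    have "eventually (\<lambda>t. dist (c e (t * (real k / real K)) / c e t) (scale_limit (real k / real K)) < \<tau>) F"
      using tendsto_ratio_scaled[OF flat_edge_ratio(3)[OF flat] tight_edge_ratio_pos[OF e] r] \<tau>
      by (rule tendstoD)
    then show ?thesis
      using eventually_ge_of_ratio[OF flat_edge_ratio(3)[OF flat] pos(2)] eventually_benchmark_pos
    proof eventually_elim
      case (elim t)
      have "0 < c e t" using elim(2,3) pos(1) by (smt (verit) mult_pos_pos)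
      then have "\<bar>c e (t * real k / real K) - scale_limit (real k / real K) * c e t\<bar>
          = c e t * \<bar>c e (t * (real k / real K)) / c e t - scale_limit (real k / real K)\<bar>"
        by (simp add: abs_mult[symmetric] field_simps)
      also have "\<dots> \<le> c e t * \<tau>"
        using elim(1) \<open>0 < c e t\<close> by (intro mult_left_mono) (auto simp: dist_real_def)
      finally show ?case by (simp add: mult.commute)
    qed
  qed
  moreover have "finite tight_edges" using finite_edges by (simp add: tight_edges_def)
  ultimately show ?thesis by (intro eventually_ball_finite ballI) auto
qed

context
  fixes m :: "nat \<Rightarrow> 'i \<Rightarrow> real"
  assumes demands_nonneg: "\<And>n i. i \<in> I \<Longrightarrow> 0 \<le> m n i"
    and inflow_pos: "\<And>n. 0 < (\<Sum>i\<in>I. m n i)"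
    and inflow_limit: "filterlim (\<lambda>n. \<Sum>i\<in>I. m n i) F sequentially"
    and positive_share:
      "Liminf sequentially (\<lambda>n. ereal (\<Sum>i\<in>positive_od_pairs. m n i / (\<Sum>j\<in>I. m n j))) > 0"
begin

lemma eventually_positive_share:
  obtains \<delta> where "0 < \<delta>"
    "eventually (\<lambda>n. \<delta> < (\<Sum>i\<in>positive_od_pairs. m n i / (\<Sum>j\<in>I. m n j))) sequentially"
proof -
  obtain z where z: "0 < ereal z"
    "ereal z < Liminf sequentially (\<lambda>n. ereal (\<Sum>i\<in>positive_od_pairs. m n i / (\<Sum>j\<in>I. m n j)))"
    using ereal_dense2[OF positive_share] by blast
  then show ?thesis using that less_LiminfD[OF z(2)] by auto
qed

lemma tight_edges_nonempty: "tight_edges \<noteq> {}"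
proof -
  obtain \<delta> where "0 < \<delta>"
    and "eventually (\<lambda>n. \<delta> < (\<Sum>i\<in>positive_od_pairs. m n i / (\<Sum>j\<in>I. m n j))) sequentially"
    by (rule eventually_positive_share)
  then obtain n where "\<delta> < (\<Sum>i\<in>positive_od_pairs. m n i / (\<Sum>j\<in>I. m n j))"
    using eventually_happens'[OF _ \<open>eventually _ sequentially\<close>] by auto
  then have "0 < (\<Sum>i\<in>positive_od_pairs. m n i / (\<Sum>j\<in>I. m n j))" using \<open>0 < \<delta>\<close> by linarith
  then have "positive_od_pairs \<noteq> {}" by auto
  then show ?thesis using positive_od_pair_tight_edge by blast
qed

lemma eventually_social_cost_large:
  obtains d where "0 < d" "eventually (\<lambda>n. \<forall>y. feasible_flow I P (m n) y \<longrightarrow>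
    d * (\<Sum>i\<in>I. m n i) * cb (\<Sum>i\<in>I. m n i) \<le> social_cost E c (edge_load I P y)) sequentially"
proof -
  define M where "M n = (\<Sum>i\<in>I. m n i)" for n
  obtain \<delta> where \<delta>: "0 < \<delta>" "eventually (\<lambda>n. \<delta> < (\<Sum>i\<in>positive_od_pairs. m n i / M n)) sequentially"
    unfolding M_def by (rule eventually_positive_share)
  define S where "S = (\<Sum>i\<in>I. real (card (P i)))"
  have card_P: "real (card (P i)) \<le> S" if "i \<in> I" for i
    unfolding S_def using finite_od_pairs that by (intro member_le_sum) auto
  have "I \<noteq> {}" using inflow_pos[of 0] by auto
  then have S: "0 < S" and card_I: "0 < real (card I)"
    unfolding S_def using finite_od_pairs finite_paths paths_nonempty
    by (auto intro!: sum_pos simp: card_gt_0_iff)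
  define \<kappa> where "\<kappa> = \<delta> / (real (card I) * S)"
  have \<kappa>: "0 < \<kappa>" using \<delta> S card_I by (simp add: \<kappa>_def)
  obtain \<beta> where \<beta>: "0 < \<beta>" "eventually (\<lambda>t. \<forall>e\<in>E. 0 < \<alpha> e \<longrightarrow> \<beta> * cb t \<le> c e (t * \<kappa>)) F"
    using eventually_positive_edges_ge[OF \<kappa>] by blast
  show ?thesis
  proof
    show "0 < \<kappa> * \<beta>" using \<kappa> \<beta> by simp
    show "eventually (\<lambda>n. \<forall>y. feasible_flow I P (m n) y \<longrightarrow>
      \<kappa> * \<beta> * (\<Sum>i\<in>I. m n i) * cb (\<Sum>i\<in>I. m n i) \<le> social_cost E c (edge_load I P y)) sequentially"
      using \<delta>(2) eventually_compose_filterlim[OF \<beta>(2) inflow_limit] unfolding M_def[symmetric]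
    proof eventually_elim
      case (elim n)
      obtain i where i: "i \<in> positive_od_pairs" "\<delta> / real (card I) \<le> m n i / M n"
        using exists_heavy_positive_od_pair[OF \<delta>(1) elim(1)] by blast
      have iI: "i \<in> I" using i by (simp add: positive_od_pairs_def)
      have M: "0 < M n" using inflow_pos by (simp add: M_def)
      have "\<kappa> * M n * real (card (P i)) = \<delta> / real (card I) * M n * (real (card (P i)) / S)"
        using S card_I by (simp add: \<kappa>_def field_simps)
      also have "\<dots> \<le> \<delta> / real (card I) * M n * 1"
        using card_P[OF iI] S M \<delta> card_I by (intro mult_left_mono) auto
      also have "\<dots> = \<delta> / real (card I) * M n" by simp
      also have "\<dots> \<le> m n i" using i(2) M by (simp add: field_simps)
      finally have heavy: "\<kappa> * M n * real (card (P i)) \<le> m n i" .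
      show ?case
      proof (intro allI impI)
        fix y assume y: "feasible_flow I P (m n) y"
        have "\<kappa> * M n * (\<beta> * cb (M n)) \<le> social_cost E c (edge_load I P y)"
          by (rule social_cost_ge_heavy_od_pair[OF y i(1) heavy])
            (use elim(2) \<kappa> \<beta>(1) M benchmark_pos[OF M] in auto)
        then show "\<kappa> * \<beta> * M n * cb (M n) \<le> social_cost E c (edge_load I P y)"
          by (simp add: algebra_simps)
      qed
    qed
  qed
qed

lemma eventually_PoA_close:
  assumes \<theta>: "0 < \<theta>"
  shows "eventually (\<lambda>n. 1 \<le> PoA E c I P (m n) \<and> PoA E c I P (m n) \<le> 1 + \<theta>) sequentially"
proof -
  define M where "M n = (\<Sum>i\<in>I. m n i)" for n
  have M: "0 < M n" for n using inflow_pos by (simp add: M_def)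
  have I: "I \<noteq> {}" using M[of 0] by (auto simp: M_def)
  obtain d where d: "0 < d" "eventually (\<lambda>n. \<forall>y. feasible_flow I P (m n) y \<longrightarrow>
      d * M n * cb (M n) \<le> social_cost E c (edge_load I P y)) sequentially"
    unfolding M_def by (rule eventually_social_cost_large)
  obtain a where a: "0 \<le> a" "eventually (\<lambda>t. \<forall>e\<in>E - steep_edges. c e t \<le> a * cb t) F"
    by (rule eventually_flat_edges_bounded)
  define l0 where "l0 = scale_limit (1/2) / 2"
  have l0: "0 < l0" using tendsto_scale_limit(2)[of "1/2"] by (simp add: l0_def)
  define C where "C = 3 + 2 * real (card E) * (a + 1 + real (card E) * a) / d"
  have C: "0 < C" unfolding C_def using a d by (simp add: add_pos_nonneg)
  define \<tau> where "\<tau> = min (l0 / 2) (min 1 (\<theta> * l0 / (2 * C)))"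
  have \<tau>: "0 < \<tau>" "\<tau> \<le> 1" "\<tau> \<le> l0 / 2" using l0 \<theta> C by (auto simp: \<tau>_def)
  have "\<tau> \<le> \<theta> * l0 / (2 * C)" by (simp add: \<tau>_def)
  then have "2 * \<tau> * C \<le> \<theta> * l0" using C by (simp add: field_simps)
  then have \<theta>_ge: "2 * \<tau> * C / l0 \<le> \<theta>" using l0 by (simp add: field_simps)
  define J where "J = nat \<lceil>1 / \<tau>\<rceil> + 1"
  define K where "K = 2 * J"
  have J: "0 < J" by (simp add: J_def)
  have "1 / \<tau> \<le> real J" unfolding J_def by linarith
  then have "1 / \<tau> \<le> real K" by (simp add: K_def)
  then have K: "0 < K" "1 / real K \<le> \<tau>" using \<tau>(1) J by (auto simp: K_def field_simps)
  define L where "L = (\<lambda>k::nat. if k = 0 then 0 else scale_limit (real k / real K))"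
  define U where "U = (\<Sum>k\<in>{1..K}. L k) / real K"
  define l where "l = (\<Sum>k\<in>{1..K}. L (k - 1)) / real K"
  have Ul: "U = l + 1 / real K" "U \<le> 1" "l0 \<le> l"
    using riemann_sums_of_mono[OF scale_limit_mono_of_tight[OF tight_edges_nonempty]
        scale_limit_1 tendsto_scale_limit(2) J K_def L_def]
    unfolding U_def l_def l0_def by auto
  define b where "b = real (card E) * real (card E) * a / \<tau> + real (card E) * a + 1"
  note inflow_limit' = inflow_limit[folded M_def]
  show ?thesis
    using eventually_compose_filterlim[OF a(2) inflow_limit']
      eventually_compose_filterlim[OF eventually_negligible_edges_small[OF \<tau>(1)] inflow_limit']
      eventually_compose_filterlim[OF eventually_steep_edges_large[OF \<tau>(1), of b] inflow_limit']
      eventually_on_window[OF eventually_tight_edges_scaling[OF \<tau>(1) K(1)] inflow_limit' \<tau>(1)]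
      d(2)
  proof eventually_elim
    case (elim n)
    have "social_cost E c (edge_load I P f) \<le> (1 + \<theta>) * social_cost E c (edge_load I P y)"
      if f: "wardrop_eq c I P (m n) f" and y: "feasible_flow I P (m n) y" for f y
    proof -
      have "social_cost E c (edge_load I P f) \<le> (1 + 2 * \<tau> * C / l0) * social_cost E c (edge_load I P y)"
        unfolding C_def
        by (rule equilibrium_cost_le[OF f y I M_def M benchmark_pos[OF M] _ tight_edges_subset
              path_avoiding_steep_edges \<tau>(1,2) K _ U_def l_def Ul l0 \<tau>(3) a(1) d(1)])
          (use elim y in \<open>auto simp: L_def b_def steep_edges_def mult.commute\<close>)
      also have "\<dots> \<le> (1 + \<theta>) * social_cost E c (edge_load I P y)"
        using \<theta>_ge social_cost_nonneg[OF y] by (intro mult_right_mono) auto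
      finally show ?thesis .
    qed
    then show ?case
      using PoA_bounds[of "m n" "d * M n * cb (M n)" \<theta>] demands_nonneg elim(5) d(1) M benchmark_pos[OF M] \<theta>
      by auto
  qed
qed

lemma PoA_tendsto_one: "(\<lambda>n. PoA E c I P (m n)) \<longlonglongrightarrow> 1"
proof (rule tendstoI)
  fix r :: real assume "0 < r"
  then show "eventually (\<lambda>n. dist (PoA E c I P (m n)) 1 < r) sequentially"
    using eventually_PoA_close[of "r / 2"] by (auto elim!: eventually_mono simp: dist_real_def)
qed

end

end

lemma network_of_routing_network:
  "routing_network src tgt E I orig dest P c \<Longrightarrow> network E I P c"
  unfolding network_def cost_function_def routing_network_def is_path_def
  by (intro conjI allI impI ballI) auto

theorem theorem6p2:
  fixes src tgt :: "'e \<Rightarrow> 'v" and E :: "'e set" and I :: "'i set"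
    and orig dest :: "'i \<Rightarrow> 'v" and P :: "'i \<Rightarrow> 'e list set"
    and c :: "'e \<Rightarrow> real \<Rightarrow> real" and m :: "nat \<Rightarrow> 'i \<Rightarrow> real"
    and cb :: "real \<Rightarrow> real" and F :: "real filter"
  assumes net: "routing_network src tgt E I orig dest P c"
    and dem_nonneg: "\<And>n i. i \<in> I \<Longrightarrow> m n i \<ge> 0"
    and inflow_pos: "\<And>n. (\<Sum>i\<in>I. m n i) > 0"
    and omega: "F = at_top \<or> F = at_right 0"
    and bench: "benchmark F cb E c"
    and a: "filterlim (\<lambda>n. \<Sum>i\<in>I. m n i) F sequentially"
    and b: "\<And>i. i \<in> I \<Longrightarrow> alpha_od F cb c P i < \<infinity>"
    and c_liminf: "Liminf sequentially
            (\<lambda>n. ereal (\<Sum>i\<in>{i\<in>I. alpha_od F cb c P i > 0}. m n i / (\<Sum>j\<in>I. m n j))) > 0"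
  shows "(\<lambda>n. PoA E c I P (m n)) \<longlonglongrightarrow> 1"
proof -
  interpret network E I P c using net by (rule network_of_routing_network)
  interpret benchmarked_network E I P c F cb
    using omega bench b by unfold_locales (auto simp: benchmark_def)
  show ?thesis
    by (rule PoA_tendsto_one) (use dem_nonneg inflow_pos a c_liminf in \<open>auto simp: positive_od_pairs_def\<close>)
qed

end
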